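(* For an integer $k\ge 1$ let $\Gamma_k$ be the $k\times k$ grid graph (on $n=k^2$ vertices), and for an integer $n\ge 1$ let $S_n$ be the star on $n$ vertices (one center adjacent to $n-1$ leaves, no other edges). For $\rho>0$ let $\mathrm{HUDG}(\rho)$ be the class of graphs realizable as hyperbolic uniform disk graphs with radius $\rho$. Then: (i) $\Gamma_k\in\mathrm{HUDG}(1/n^3)$ for all $k$, where $n=k^2$; (ii) $S_n\notin\mathrm{HUDG}(1/n^3)$ for all $n\ge 8$; (iii) $\Gamma_k\notin\mathrm{HUDG}(\log n)$ for all $k\ge 5$, where $n=k^2$; (iv) $S_n\in\mathrm{HUDG}(\log n)$ for all $n$. Here $\log$ is the natural logarithm.
   Context: $\mathbb{H}^2$ denotes the hyperbolic plane of Gaussian curvature $-1$. A graph is a hyperbolic uniform disk graph with radius $\rho$ if it is isomorphic to the intersection graph of a finite family of closed hyperbolic disks of radius $\rho$ in $\mathbb{H}^2$, i.e., there are points (centers) assigned injectively to its vertices such that two vertices are adjacent iff their centers have hyperbolic distance at most $2\rho$. *)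

theory Defs
  imports Complex_Main
begin

text \<open>Hyperbolic plane of curvature -1, upper half-plane model:
  points are complex numbers with positive imaginary part.\<close>

definition H2 :: "complex set" where
  "H2 = {z. Im z > 0}"

definition hdist :: "complex \<Rightarrow> complex \<Rightarrow> real" where
  "hdist z w = arcosh (1 + (cmod (z - w))\<^sup>2 / (2 * Im z * Im w))"

definition hudg :: "real \<Rightarrow> 'a set \<Rightarrow> ('a \<Rightarrow> 'a \<Rightarrow> bool) \<Rightarrow> bool" where
  "hudg \<rho> V E \<longleftrightarrow> finite V \<and>
     (\<exists>p. inj_on p V \<and> p ` V \<subseteq> H2 \<and>
        (\<forall>u\<in>V. \<forall>v\<in>V. u \<noteq> v \<longrightarrow> (E u v \<longleftrightarrow> hdist (p u) (p v) \<le> 2 * \<rho>)))"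

definition grid_V :: "nat \<Rightarrow> (nat \<times> nat) set" where
  "grid_V k = {0..<k} \<times> {0..<k}"

definition grid_E :: "(nat \<times> nat) \<Rightarrow> (nat \<times> nat) \<Rightarrow> bool" where
  "grid_E a b \<longleftrightarrow>
     (fst a = fst b \<and> (snd a = snd b + 1 \<or> snd b = snd a + 1)) \<or>
     (snd a = snd b \<and> (fst a = fst b + 1 \<or> fst b = fst a + 1))"

definition star_V :: "nat \<Rightarrow> nat set" where
  "star_V n = {0..<n}"

definition star_E :: "nat \<Rightarrow> nat \<Rightarrow> bool" where
  "star_E a b \<longleftrightarrow> a \<noteq> b \<and> (a = 0 \<or> b = 0)"

end

theory Submission
  imports Defs "HOL-Analysis.Complex_Transcendental"
begin

text \<open>Parts (i) and (iv) are explicit placements in the upper half-plane, where the cosh of the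
  distance of z and w is 1 + |z - w|^2 / (2 Im z Im w). For the grid, a square lattice
  of tiny mesh s at height about 1 works: there hyperbolic distances are Euclidean ones up to a
  factor between 1 and 5/4, while grid neighbours are at Euclidean distance s and all other
  pairs at distance at least s sqrt 2. For the star, the centre sits at height n^2/2 and the
  leaves at height 1, spaced n apart.

  Parts (ii) and (iii) move one vertex to the centre of the Klein disk, where geodesics are
  straight chords and hyperbolic balls are convex. In (ii), two of seven leaves, all very close
  to the centre, are seen from it under an angle of at most 2 pi / 7, which makes them
  adjacent. In (iii), the eight grid vertices around an inner vertex form an 8-cycle: its four
  spokes are adjacent to the centre and pairwise non-adjacent, its four corners are not
  adjacent to the centre. Every edge of the cycle is seen from the centre under an angle below
  pi / 2, and below pi / 6 at spokes far from the centre, of which there are at least three;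
  so the cycle does not wind around the centre. Hence some spoke lies angularly between two
  spokes joined through a corner, and the four-point inequality
  d(x, w) + d(y, z) \<le> d(x, y) + d(z, w) for crossing chords makes it adjacent to one of them.\<close>

section \<open>Realizations in the upper half-plane\<close>

definition hdist_quot :: "complex \<Rightarrow> complex \<Rightarrow> real" where
  "hdist_quot z w = (cmod (z - w))\<^sup>2 / (2 * Im z * Im w)"

lemma hdist_quot_commute: "hdist_quot z w = hdist_quot w z"
  by (simp add: hdist_quot_def norm_minus_commute mult_ac)

lemma arcosh_le_iff_le_cosh:
  fixes x y :: real
  assumes "x \<ge> 1" "y \<ge> 0"
  shows "arcosh x \<le> y \<longleftrightarrow> x \<le> cosh y"
  using cosh_real_nonneg_le_iff[of "arcosh x" y] assms by simp

lemma hdist_le_iff: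
  assumes "z \<in> H2" "w \<in> H2" "r \<ge> 0"
  shows "hdist z w \<le> r \<longleftrightarrow> 1 + hdist_quot z w \<le> cosh r"
  using assms by (simp add: hdist_def hdist_quot_def H2_def arcosh_le_iff_le_cosh)

lemma cosh_2_ln:
  fixes x :: real
  assumes "x > 0"
  shows "cosh (2 * ln x) = (x\<^sup>2 + inverse (x\<^sup>2)) / 2"
proof -
  have "2 * ln x = ln (x\<^sup>2)"
    using assms by (simp add: ln_realpow)
  then show ?thesis
    using assms by (simp add: cosh_ln_real)
qed

lemma cosh_le_one_plus_sq:
  fixes x :: real
  assumes "0 \<le> x" "x \<le> 1"
  shows "cosh x \<le> 1 + x\<^sup>2"
proof -
  have "exp (-x) \<le> inverse (1 + x)"
    using exp_ge_add_one_self[of x] assms by (simp add: exp_minus le_imp_inverse_le)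
  also have "\<dots> \<le> 1 - x + x\<^sup>2"
  proof -
    have "1 \<le> (1 + x) * (1 - x + x\<^sup>2)"
      using assms by (simp add: power2_eq_square algebra_simps)
    then show ?thesis
      using assms by (simp add: field_simps)
  qed
  finally show ?thesis
    using exp_bound[OF assms] by (simp add: cosh_def)
qed

lemma hdist_quot_same_height: "hdist_quot (Complex a 1) (Complex b 1) = (a - b)\<^sup>2 / 2"
  by (simp add: hdist_quot_def cmod_power2)

lemma hdist_quot_apex_leaf:
  fixes N x :: real
  assumes "N \<ge> 2" "\<bar>x\<bar> \<le> N / 2 - 1"
  shows "hdist_quot (Complex 0 (N\<^sup>2 / 2)) (Complex (x * N) 1) \<le> cosh (2 * ln N) - 1"
proof -
  have N0: "N > 0"
    using assms by simp
  have "\<bar>x * N\<bar> \<le> (N / 2 - 1) * N"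
    using assms by (simp add: abs_mult mult_right_mono)
  then have "(x * N)\<^sup>2 \<le> ((N / 2 - 1) * N)\<^sup>2"
    by (metis abs_ge_zero power2_abs power_mono)
  moreover have "N\<^sup>2 * (N - 1) \<ge> 2\<^sup>2 * 1"
    using assms by (intro mult_mono power_mono) auto
  moreover have "((N / 2 - 1) * N)\<^sup>2 + (N\<^sup>2 / 2 - 1)\<^sup>2 = N\<^sup>2 * (N\<^sup>2 / 2 - N) + 1"
    by (simp add: power2_eq_square algebra_simps)
  moreover have "(N\<^sup>2 + inverse (N\<^sup>2)) / 2 * N\<^sup>2 - N\<^sup>2 = N\<^sup>2 * (N\<^sup>2 / 2 - 1) + 1 / 2"
    using assms by (simp add: power2_eq_square field_simps)
  ultimately have "(x * N)\<^sup>2 + (N\<^sup>2 / 2 - 1)\<^sup>2 \<le> (N\<^sup>2 + inverse (N\<^sup>2)) / 2 * N\<^sup>2 - N\<^sup>2"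
    by (simp add: algebra_simps)
  moreover have "hdist_quot (Complex 0 (N\<^sup>2 / 2)) (Complex (x * N) 1)
      = ((x * N)\<^sup>2 + (N\<^sup>2 / 2 - 1)\<^sup>2) / N\<^sup>2"
    by (simp add: hdist_quot_def cmod_power2)
  moreover have "cosh (2 * ln N) - 1 = ((N\<^sup>2 + inverse (N\<^sup>2)) / 2 * N\<^sup>2 - N\<^sup>2) / N\<^sup>2"
    using assms unfolding cosh_2_ln[OF N0] by (simp add: field_simps)
  ultimately show ?thesis
    by (simp add: divide_right_mono)
qed

lemma hdist_quot_leaves:
  fixes N x y :: real
  assumes "N \<ge> 2" "\<bar>x - y\<bar> \<ge> 1"
  shows "hdist_quot (Complex (x * N) 1) (Complex (y * N) 1) > cosh (2 * ln N) - 1"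
proof -
  have "1 \<le> (x - y)\<^sup>2"
    using assms(2) by (metis abs_le_square_iff abs_one one_power2)
  then have "N\<^sup>2 / 2 \<le> ((x - y) * N)\<^sup>2 / 2"
    by (simp add: power_mult_distrib mult_le_cancel_right1)
  moreover have "inverse (N\<^sup>2) < 2"
    using assms(1) by (smt (verit) inverse_le_1_iff one_le_power)
  moreover have "hdist_quot (Complex (x * N) 1) (Complex (y * N) 1) = ((x - y) * N)\<^sup>2 / 2"
    by (simp add: hdist_quot_same_height algebra_simps)
  moreover have "cosh (2 * ln N) = (N\<^sup>2 + inverse (N\<^sup>2)) / 2"
    using assms(1) by (simp add: cosh_2_ln)
  ultimately show ?thesis
    by (simp add: field_simps)
qed

lemma star_hudg_ln:
  assumes "n \<ge> 1"
  shows "hudg (ln (real n)) (star_V n) star_E"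
proof -
  define N where "N = real n"
  define p where "p j = (if j = 0 then Complex 0 (N\<^sup>2 / 2) else Complex ((real j - N / 2) * N) 1)"
    for j :: nat
  have N1: "N \<ge> 1"
    using assms by (simp add: N_def)
  have in_H2: "p j \<in> H2" for j
    using N1 by (simp add: p_def H2_def)
  have adj: "star_E a b \<longleftrightarrow> hdist (p a) (p b) \<le> 2 * ln N"
    if ab: "a \<in> star_V n" "b \<in> star_V n" "a \<noteq> b" for a b
  proof -
    have N2: "N \<ge> 2"
      using ab by (auto simp: star_V_def N_def)
    have "hdist (p a) (p b) \<le> 2 * ln N \<longleftrightarrow> hdist_quot (p a) (p b) \<le> cosh (2 * ln N) - 1"
      using hdist_le_iff[OF in_H2 in_H2] N1 by auto
    moreover have "hdist_quot (p 0) (p j) \<le> cosh (2 * ln N) - 1" if "j \<in> star_V n" "j \<noteq> 0" for j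
      using hdist_quot_apex_leaf[OF N2, of "real j - N / 2"] that
      by (simp add: p_def star_V_def N_def abs_le_iff)
    moreover have "hdist_quot (p a) (p b) > cosh (2 * ln N) - 1" if "a \<noteq> 0" "b \<noteq> 0"
    proof -
      have "1 \<le> \<bar>(real a - N / 2) - (real b - N / 2)\<bar>"
        using ab(3) by (cases "a < b") auto
      then show ?thesis
        using hdist_quot_leaves[OF N2] that by (simp add: p_def)
    qed
    ultimately show ?thesis
      using ab hdist_quot_commute[of "p a" "p b"] unfolding star_E_def
      by (metis not_le)
  qed
  have "inj_on p (star_V n)"
  proof (rule inj_onI, rule ccontr)
    fix a b
    assume ab: "a \<in> star_V n" "b \<in> star_V n" "p a = p b" "a \<noteq> b"
    then have "N\<^sup>2 / 2 \<noteq> 1"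
      using power_mono[of 2 N 2] by (auto simp: star_V_def N_def)
    then show False
      using ab N1 by (auto simp: p_def complex_eq_iff split: if_splits)
  qed
  then show ?thesis
    using in_H2 adj by (auto simp: hudg_def star_V_def N_def)
qed

lemma grid_E_sqdist:
  fixes a b :: "nat \<times> nat"
  defines "d \<equiv> (real (fst a) - real (fst b))\<^sup>2 + (real (snd a) - real (snd b))\<^sup>2"
  assumes "a \<noteq> b"
  shows "grid_E a b \<Longrightarrow> d = 1" and "\<not> grid_E a b \<Longrightarrow> d \<ge> 2"
proof -
  define i where "i = int (fst a) - int (fst b)"
  define j where "j = int (snd a) - int (snd b)"
  have d: "d = of_int (i\<^sup>2 + j\<^sup>2)"
    by (simp add: d_def i_def j_def)
  have grid: "grid_E a b \<longleftrightarrow> \<bar>i\<bar> + \<bar>j\<bar> = 1"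
    using assms(2) by (auto simp: grid_E_def i_def j_def prod_eq_iff)
  have "\<bar>i\<bar> + \<bar>j\<bar> \<ge> 1"
    using assms(2) by (auto simp: i_def j_def prod_eq_iff)
  have sq_ge: "\<bar>x\<bar> \<le> x\<^sup>2" for x :: int
    using mult_left_mono[of 1 "\<bar>x\<bar>" "\<bar>x\<bar>"]
    by (cases "x = 0") (auto simp: power2_eq_square abs_mult_self_eq)
  show "grid_E a b \<Longrightarrow> d = 1"
  proof -
    assume "grid_E a b"
    then have "(i = 0 \<and> \<bar>j\<bar> = 1) \<or> (j = 0 \<and> \<bar>i\<bar> = 1)"
      unfolding grid by arith
    then have "i\<^sup>2 + j\<^sup>2 = 1"
      by (auto simp: abs_square_eq_1)
    then show "d = 1"
      by (simp add: d)
  qed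
  show "\<not> grid_E a b \<Longrightarrow> d \<ge> 2"
    using \<open>\<bar>i\<bar> + \<bar>j\<bar> \<ge> 1\<close> sq_ge[of i] sq_ge[of j] unfolding grid d by linarith
qed

lemma grid_hudg_lattice:
  fixes s \<rho> :: real
  assumes "s > 0" "s * (real k - 1) \<le> 1 / 4" "\<rho> \<ge> 0" "cosh (2 * \<rho>) = 1 + s\<^sup>2 / 2"
  shows "hudg \<rho> (grid_V k) grid_E"
proof -
  define p where "p v = Complex (s * real (fst v)) (1 + s * real (snd v))" for v :: "nat \<times> nat"
  have in_H2: "p v \<in> H2" for v
    using assms(1) by (simp add: p_def H2_def add_pos_nonneg)
  have height: "1 \<le> Im (p v) \<and> Im (p v) \<le> 5 / 4" if "v \<in> grid_V k" for v
  proof -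
    have "s * real (snd v) \<le> s * (real k - 1)"
      using that assms(1) by (intro mult_left_mono) (auto simp: grid_V_def)
    moreover have "0 \<le> s * real (snd v)"
      using assms(1) by simp
    moreover have "Im (p v) = 1 + s * real (snd v)"
      by (simp add: p_def)
    ultimately show ?thesis
      using assms(2) by linarith
  qed
  have adj: "grid_E a b \<longleftrightarrow> hdist (p a) (p b) \<le> 2 * \<rho>"
    if ab: "a \<in> grid_V k" "b \<in> grid_V k" "a \<noteq> b" for a b
  proof -
    define d where "d = (real (fst a) - real (fst b))\<^sup>2 + (real (snd a) - real (snd b))\<^sup>2"
    define y where "y = Im (p a) * Im (p b)"
    have "1 * 1 \<le> y" "y \<le> 5 / 4 * (5 / 4)"
      using height[OF ab(1)] height[OF ab(2)] unfolding y_def by (intro mult_mono; simp)+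
    then have y: "1 \<le> y" "y \<le> 5 / 4 * (5 / 4)"
      by simp_all
    have Q: "hdist_quot (p a) (p b) = s\<^sup>2 * d / (2 * y)"
      by (simp add: hdist_quot_def p_def cmod_power2 d_def y_def power_mult_distrib
          right_diff_distrib[symmetric] distrib_left)
    have "hdist (p a) (p b) \<le> 2 * \<rho> \<longleftrightarrow> hdist_quot (p a) (p b) \<le> s\<^sup>2 / 2"
      using hdist_le_iff[OF in_H2 in_H2] assms(3,4) by simp
    moreover have "s\<^sup>2 * d / (2 * y) \<le> s\<^sup>2 / 2" if "d = 1"
      using that y assms(1) by (simp add: field_simps mult_le_cancel_left1)
    moreover have "s\<^sup>2 / 2 < s\<^sup>2 * d / (2 * y)" if "d \<ge> 2"
    proof -
      have "s\<^sup>2 * y < s\<^sup>2 * d"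
        using that y assms(1) by (intro mult_strict_left_mono) auto
      then show ?thesis
        using y by (simp add: field_simps)
    qed
    ultimately show ?thesis
      using grid_E_sqdist[OF ab(3), folded d_def] Q by (metis not_le)
  qed
  have "inj_on p (grid_V k)"
    using assms(1) by (intro inj_onI) (auto simp: p_def complex_eq_iff prod_eq_iff)
  then show ?thesis
    using in_H2 adj by (auto simp: hudg_def grid_V_def)
qed

lemma grid_hudg_inverse_cube:
  assumes "k \<ge> 1"
  shows "hudg (1 / (real (k\<^sup>2))^3) (grid_V k) grid_E"
proof -
  define K where "K = real k"
  define \<rho> where "\<rho> = 1 / (real (k\<^sup>2))^3"
  define s where "s = sqrt (2 * (cosh (2 * \<rho>) - 1))"
  have \<rho>: "\<rho> = 1 / K ^ 6" "\<rho> > 0"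
    using assms by (simp_all add: \<rho>_def K_def power_mult[symmetric])
  have "cosh 0 < cosh (2 * \<rho>)"
    using \<rho>(2) by (subst cosh_real_nonneg_less_iff) auto
  then have s: "s > 0" "cosh (2 * \<rho>) = 1 + s\<^sup>2 / 2"
    by (simp_all add: s_def field_simps)
  have "s * (K - 1) \<le> 1 / 4"
  proof (cases "k = 1")
    case False
    then have K2: "K \<ge> 2"
      using assms by (simp add: K_def)
    have K5: "2 ^ 5 \<le> K ^ 5"
      using K2 by (intro power_mono) auto
    have "2 ^ 6 \<le> K ^ 6"
      using K2 by (intro power_mono) auto
    then have "2 * \<rho> \<le> 1"
      using K2 by (simp add: \<rho>(1) divide_le_eq)
    then have "2 * (cosh (2 * \<rho>) - 1) \<le> 2 * (2 * \<rho>)\<^sup>2"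
      using cosh_le_one_plus_sq[of "2 * \<rho>"] \<rho>(2) by simp
    also have "\<dots> \<le> (4 * \<rho>)\<^sup>2"
      by (simp add: power2_eq_square)
    finally have "2 * (cosh (2 * \<rho>) - 1) \<le> (4 * \<rho>)\<^sup>2" .
    then have "s \<le> sqrt ((4 * \<rho>)\<^sup>2)"
      unfolding s_def by (rule real_sqrt_le_mono)
    then have "s \<le> 4 * \<rho>"
      using \<rho>(2) by (simp only: real_sqrt_abs)
    then have "s * (K - 1) \<le> 4 * \<rho> * K"
      using s K2 by (intro mult_mono) auto
    also have "\<dots> = 4 / K ^ 5"
      using K2 by (simp add: \<rho>(1) field_simps eval_nat_numeral)
    also have "\<dots> \<le> 1 / 4"
      using K5 K2 by (simp add: divide_le_eq)
    finally show ?thesis .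
  qed (simp add: K_def)
  then show ?thesis
    using grid_hudg_lattice[OF s(1) _ less_imp_le[OF \<rho>(2)] s(2)] by (simp add: K_def \<rho>_def)
qed

section \<open>The Klein model\<close>

text \<open>A point p of the open unit disk stands for the point (p, 1) / mink_norm p of the hyperboloid
  in Minkowski space; mink_form p q is the Minkowski form of (p, 1) and (q, 1), so klein_cosh p q
  is the cosh of the hyperbolic distance of p and q in the Klein model.\<close>

definition mink_norm :: "complex \<Rightarrow> real" where
  "mink_norm p = sqrt (1 - (cmod p)\<^sup>2)"

definition mink_form :: "complex \<Rightarrow> complex \<Rightarrow> real" where
  "mink_form p q = 1 - Re (p * cnj q)"

definition klein_cosh :: "complex \<Rightarrow> complex \<Rightarrow> real" where
  "klein_cosh p q = mink_form p q / (mink_norm p * mink_norm q)"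

lemma cmod_diff_sq: "(cmod (a - b))\<^sup>2 = (cmod a)\<^sup>2 + (cmod b)\<^sup>2 - 2 * Re (a * cnj b)"
  unfolding cmod_power2 by (simp add: power2_eq_square algebra_simps)

lemma mink_norm_pos: "cmod p < 1 \<Longrightarrow> mink_norm p > 0"
  unfolding mink_norm_def by (simp add: abs_square_less_1)

lemma mink_norm_sq: "cmod p < 1 \<Longrightarrow> (mink_norm p)\<^sup>2 = 1 - (cmod p)\<^sup>2"
  unfolding mink_norm_def by (simp add: abs_square_less_1 less_imp_le)

lemma mink_norm_0 [simp]: "mink_norm 0 = 1"
  by (simp add: mink_norm_def)

lemma mink_form_commute: "mink_form p q = mink_form q p"
proof -
  have "Re (p * cnj q) = Re (q * cnj p)"
    by (simp add: algebra_simps)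
  then show ?thesis
    by (simp add: mink_form_def)
qed

lemma mink_form_self: "mink_form p p = 1 - (cmod p)\<^sup>2"
  by (simp add: mink_form_def complex_norm_square[symmetric] del: complex_norm_square)

lemma klein_cosh_commute: "klein_cosh p q = klein_cosh q p"
  by (simp add: klein_cosh_def mink_form_commute mult.commute)

lemma klein_cosh_0_left: "klein_cosh 0 q = 1 / mink_norm q"
  by (simp add: klein_cosh_def mink_form_def)

lemma klein_cosh_self:
  assumes "cmod p < 1"
  shows "klein_cosh p p = 1"
proof -
  have "mink_form p p = mink_norm p * mink_norm p"
    using mink_norm_sq[OF assms] by (simp add: mink_form_self power2_eq_square)
  then show ?thesis
    using mink_norm_pos[OF assms] by (simp add: klein_cosh_def)
qed

lemma mink_form_pos:
  assumes "cmod p < 1" "cmod q < 1"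
  shows "mink_form p q > 0"
proof -
  have "\<bar>Re (p * cnj q)\<bar> \<le> cmod p * cmod q"
    using abs_Re_le_cmod[of "p * cnj q"] by (simp add: norm_mult)
  also have "\<dots> \<le> cmod p"
    using assms(2) by (simp add: mult_left_le)
  finally show ?thesis
    using assms(1) by (simp add: mink_form_def)
qed

text \<open>The reversed Cauchy-Schwarz inequality for time-like vectors of Minkowski space.\<close>

lemma mink_form_ge:
  assumes "cmod p < 1" "cmod q < 1"
  shows "mink_form p q \<ge> mink_norm p * mink_norm q"
proof -
  define a where "a = Re p"
  define b where "b = Im p"
  define c where "c = Re q"
  define d where "d = Im q"
  have ab: "a\<^sup>2 + b\<^sup>2 < 1"
    using assms(1) by (simp add: a_def b_def cmod_def)
  have "(a * d - b * c)\<^sup>2 = (a * (d - b) - b * (c - a))\<^sup>2"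
    by (simp add: algebra_simps)
  also have "\<dots> \<le> (a\<^sup>2 + b\<^sup>2) * ((d - b)\<^sup>2 + (c - a)\<^sup>2)"
  proof -
    have "(a\<^sup>2 + b\<^sup>2) * ((d - b)\<^sup>2 + (c - a)\<^sup>2) - (a * (d - b) - b * (c - a))\<^sup>2
        = (a * (c - a) + b * (d - b))\<^sup>2"
      by (simp add: power2_eq_square algebra_simps)
    then show ?thesis
      by (smt (verit) zero_le_power2)
  qed
  also have "\<dots> \<le> (d - b)\<^sup>2 + (c - a)\<^sup>2"
    using ab by (intro mult_left_le_one_le) auto
  finally have "(a * d - b * c)\<^sup>2 \<le> (a - c)\<^sup>2 + (b - d)\<^sup>2"
    by (simp add: power2_commute)
  moreover have "(mink_form p q)\<^sup>2 - (1 - (cmod p)\<^sup>2) * (1 - (cmod q)\<^sup>2)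
      = (a - c)\<^sup>2 + (b - d)\<^sup>2 - (a * d - b * c)\<^sup>2"
    unfolding mink_form_def cmod_power2 a_def b_def c_def d_def
    by (simp add: power2_eq_square algebra_simps)
  ultimately have "(mink_norm p * mink_norm q)\<^sup>2 \<le> (mink_form p q)\<^sup>2"
    using assms by (simp add: power_mult_distrib mink_norm_sq)
  then show ?thesis
    using mink_form_pos[OF assms] by (rule power2_le_imp_le[OF _ less_imp_le])
qed

lemma klein_cosh_ge_1:
  assumes "cmod p < 1" "cmod q < 1"
  shows "klein_cosh p q \<ge> 1"
  using mink_form_ge[OF assms] mink_norm_pos[OF assms(1)] mink_norm_pos[OF assms(2)]
  by (simp add: klein_cosh_def)

text \<open>klein_chart c maps the upper half-plane isometrically onto the Klein disk, sending c to
  the origin.\<close>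

definition cayley :: "complex \<Rightarrow> complex \<Rightarrow> complex" where
  "cayley c z = (z - c) / (z - cnj c)"

definition poincare_to_klein :: "complex \<Rightarrow> complex" where
  "poincare_to_klein w = of_real (2 / (1 + (cmod w)\<^sup>2)) * w"

definition klein_chart :: "complex \<Rightarrow> complex \<Rightarrow> complex" where
  "klein_chart c z = poincare_to_klein (cayley c z)"

lemma cayley_denom_nonzero: "c \<in> H2 \<Longrightarrow> z \<in> H2 \<Longrightarrow> z - cnj c \<noteq> 0"
  by (auto simp: H2_def complex_eq_iff)

lemma one_minus_norm_cayley_sq:
  assumes "c \<in> H2" "z \<in> H2"
  shows "1 - (cmod (cayley c z))\<^sup>2 = 4 * Im z * Im c / (cmod (z - cnj c))\<^sup>2"
proof -
  define X where "X = (cmod (z - cnj c))\<^sup>2"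
  have X: "X > 0"
    using cayley_denom_nonzero[OF assms] by (simp add: X_def)
  have "(cmod (z - c))\<^sup>2 = X - 4 * Im z * Im c"
    unfolding X_def cmod_power2 by (simp add: power2_eq_square algebra_simps)
  then have "1 - (cmod (cayley c z))\<^sup>2 = 1 - (X - 4 * Im z * Im c) / X"
    by (simp add: cayley_def norm_divide power_divide X_def)
  also have "\<dots> = 4 * Im z * Im c / X"
    using X by (simp add: field_simps)
  finally show ?thesis
    by (simp add: X_def)
qed

lemma norm_cayley_less_1:
  assumes "c \<in> H2" "z \<in> H2"
  shows "cmod (cayley c z) < 1"
proof -
  have "1 - (cmod (cayley c z))\<^sup>2 > 0"
    using one_minus_norm_cayley_sq[OF assms] assms cayley_denom_nonzero[OF assms]
    by (simp add: H2_def)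
  then show ?thesis
    by (simp add: abs_square_less_1)
qed

text \<open>The Cayley transform is an isometry onto the Poincare disk.\<close>

lemma hdist_quot_cayley:
  assumes "c \<in> H2" "z1 \<in> H2" "z2 \<in> H2"
  defines "w1 \<equiv> cayley c z1" and "w2 \<equiv> cayley c z2"
  shows "hdist_quot z1 z2 = 2 * (cmod (w1 - w2))\<^sup>2 / ((1 - (cmod w1)\<^sup>2) * (1 - (cmod w2)\<^sup>2))"
proof -
  define A where "A = (cmod (z1 - cnj c))\<^sup>2"
  define B where "B = (cmod (z2 - cnj c))\<^sup>2"
  have pos: "A > 0" "B > 0" "Im c > 0" "Im z1 > 0" "Im z2 > 0"
    using assms cayley_denom_nonzero[OF assms(1)] by (auto simp: A_def B_def H2_def)
  have "w1 - w2 = (z1 - z2) * (c - cnj c) / ((z1 - cnj c) * (z2 - cnj c))"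
    using cayley_denom_nonzero[OF assms(1,2)] cayley_denom_nonzero[OF assms(1,3)]
    by (simp add: w1_def w2_def cayley_def field_simps)
  moreover have "(cmod (c - cnj c))\<^sup>2 = 4 * (Im c)\<^sup>2"
    unfolding cmod_power2 by (simp add: power2_eq_square)
  ultimately have "(cmod (w1 - w2))\<^sup>2 = (cmod (z1 - z2))\<^sup>2 * (4 * (Im c)\<^sup>2) / (A * B)"
    by (simp add: norm_mult norm_divide power_mult_distrib power_divide A_def B_def)
  then have "2 * (cmod (w1 - w2))\<^sup>2 / ((1 - (cmod w1)\<^sup>2) * (1 - (cmod w2)\<^sup>2))
      = 2 * ((cmod (z1 - z2))\<^sup>2 * (4 * (Im c)\<^sup>2) / (A * B))
        / ((4 * Im z1 * Im c / A) * (4 * Im z2 * Im c / B))"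
    using one_minus_norm_cayley_sq[OF assms(1,2)] one_minus_norm_cayley_sq[OF assms(1,3)]
    by (simp add: w1_def w2_def A_def B_def)
  also have "\<dots> = hdist_quot z1 z2"
  proof -
    have gen: "2 * (n * (4 * y\<^sup>2) / (a * b)) / ((4 * u * y / a) * (4 * v * y / b))
        = n / (2 * u * v)"
      if "a > 0" "b > 0" "y > 0" "u > 0" "v > 0" for n a b y u v :: real
      using that by (simp add: field_simps power2_eq_square)
    show ?thesis
      unfolding hdist_quot_def by (rule gen) (use pos in simp_all)
  qed
  finally show ?thesis ..
qed

lemma norm_poincare_to_klein:
  "cmod (poincare_to_klein w) = 2 * cmod w / (1 + (cmod w)\<^sup>2)"
proof -
  have "cmod (poincare_to_klein w) = \<bar>2 / (1 + (cmod w)\<^sup>2)\<bar> * cmod w"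
    by (simp only: poincare_to_klein_def norm_mult norm_of_real)
  then show ?thesis
    by (simp add: add_pos_nonneg)
qed

lemma one_minus_norm_poincare_to_klein_sq:
  "1 - (cmod (poincare_to_klein w))\<^sup>2 = ((1 - (cmod w)\<^sup>2) / (1 + (cmod w)\<^sup>2))\<^sup>2"
proof -
  have "1 - (2 * r / (1 + r\<^sup>2))\<^sup>2 = ((1 - r\<^sup>2) / (1 + r\<^sup>2))\<^sup>2" for r :: real
  proof -
    have "1 + r\<^sup>2 > 0"
      by (simp add: add_pos_nonneg)
    then show ?thesis
      by (simp add: divide_simps) (simp add: power2_eq_square algebra_simps)
  qed
  then show ?thesis
    unfolding norm_poincare_to_klein .
qed

lemma norm_poincare_to_klein_less_1:
  assumes "cmod w < 1"
  shows "cmod (poincare_to_klein w) < 1"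
proof -
  have "(1 - (cmod w)\<^sup>2) / (1 + (cmod w)\<^sup>2) > 0"
    using assms by (simp add: abs_square_less_1 add_pos_nonneg)
  then have "1 - (cmod (poincare_to_klein w))\<^sup>2 > 0"
    unfolding one_minus_norm_poincare_to_klein_sq by (rule zero_less_power)
  then show ?thesis
    by (simp add: abs_square_less_1)
qed

lemma mink_norm_poincare_to_klein:
  assumes "cmod w < 1"
  shows "mink_norm (poincare_to_klein w) = (1 - (cmod w)\<^sup>2) / (1 + (cmod w)\<^sup>2)"
proof -
  have "(1 - (cmod w)\<^sup>2) / (1 + (cmod w)\<^sup>2) > 0"
    using assms by (simp add: abs_square_less_1 add_pos_nonneg)
  then show ?thesis
    unfolding mink_norm_def one_minus_norm_poincare_to_klein_sq real_sqrt_abs by (rule abs_of_pos)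
qed

lemma klein_cosh_poincare_to_klein:
  assumes "cmod w1 < 1" "cmod w2 < 1"
  shows "klein_cosh (poincare_to_klein w1) (poincare_to_klein w2)
    = 1 + 2 * (cmod (w1 - w2))\<^sup>2 / ((1 - (cmod w1)\<^sup>2) * (1 - (cmod w2)\<^sup>2))"
proof -
  define a where "a = (cmod w1)\<^sup>2"
  define b where "b = (cmod w2)\<^sup>2"
  define e where "e = Re (w1 * cnj w2)"
  have ab: "0 \<le> a" "a < 1" "0 \<le> b" "b < 1"
    using assms by (auto simp: a_def b_def abs_square_less_1)
  have "mink_form (poincare_to_klein w1) (poincare_to_klein w2) = 1 - 4 * e / ((1 + a) * (1 + b))"
    by (simp add: mink_form_def poincare_to_klein_def e_def a_def b_def)
  moreover have "(cmod (w1 - w2))\<^sup>2 = a + b - 2 * e"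
    by (simp add: cmod_diff_sq a_def b_def e_def)
  moreover have "(1 - 4 * e / ((1 + a) * (1 + b))) / ((1 - a) / (1 + a) * ((1 - b) / (1 + b)))
      = 1 + 2 * (a + b - 2 * e) / ((1 - a) * (1 - b))"
  proof -
    define P where "P = (1 + a) * (1 + b)"
    define M where "M = (1 - a) * (1 - b)"
    have PM: "P > 0" "M > 0"
      using ab by (simp_all add: P_def M_def)
    have "(1 - 4 * e / P) / (M / P) = (P - 4 * e) / M"
      using PM by (simp add: field_simps)
    also have "\<dots> = 1 + 2 * (a + b - 2 * e) / M"
      using PM by (simp add: P_def M_def field_simps)
    finally show ?thesis
      by (simp add: P_def M_def)
  qed
  ultimately show ?thesis
    unfolding klein_cosh_def mink_norm_poincare_to_klein[OF assms(1)]
      mink_norm_poincare_to_klein[OF assms(2)]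
    by (simp add: a_def b_def)
qed

lemma norm_klein_chart_less_1: "c \<in> H2 \<Longrightarrow> z \<in> H2 \<Longrightarrow> cmod (klein_chart c z) < 1"
  unfolding klein_chart_def by (intro norm_poincare_to_klein_less_1 norm_cayley_less_1)

lemma klein_chart_self: "c \<in> H2 \<Longrightarrow> klein_chart c c = 0"
  by (simp add: klein_chart_def cayley_def poincare_to_klein_def)

lemma klein_cosh_klein_chart:
  assumes "c \<in> H2" "z1 \<in> H2" "z2 \<in> H2"
  shows "klein_cosh (klein_chart c z1) (klein_chart c z2) = 1 + hdist_quot z1 z2"
  unfolding klein_chart_def hdist_quot_cayley[OF assms]
  using klein_cosh_poincare_to_klein norm_cayley_less_1 assms by simp

lemma hudg_klein_realization:
  assumes "hudg \<rho> V E" "v \<in> V" "\<rho> \<ge> 0"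
  obtains K where "K v = 0" "\<And>u. u \<in> V \<Longrightarrow> cmod (K u) < 1"
    "\<And>u w. u \<in> V \<Longrightarrow> w \<in> V \<Longrightarrow> u \<noteq> w \<Longrightarrow> E u w \<longleftrightarrow> klein_cosh (K u) (K w) \<le> cosh (2 * \<rho>)"
proof -
  obtain p where p: "p ` V \<subseteq> H2"
    "\<forall>u\<in>V. \<forall>w\<in>V. u \<noteq> w \<longrightarrow> (E u w \<longleftrightarrow> hdist (p u) (p w) \<le> 2 * \<rho>)"
    using assms(1) unfolding hudg_def by (elim conjE exE)
  have H2: "p u \<in> H2" if "u \<in> V" for u
    using p(1) that by blast
  define K where "K u = klein_chart (p v) (p u)" for u
  have "K v = 0"
    unfolding K_def by (rule klein_chart_self[OF H2[OF assms(2)]])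
  moreover have "cmod (K u) < 1" if "u \<in> V" for u
    unfolding K_def using H2 that assms(2) by (intro norm_klein_chart_less_1)
  moreover have "E u w \<longleftrightarrow> klein_cosh (K u) (K w) \<le> cosh (2 * \<rho>)"
    if "u \<in> V" "w \<in> V" "u \<noteq> w" for u w
  proof -
    have "hdist (p u) (p w) \<le> 2 * \<rho> \<longleftrightarrow> 1 + hdist_quot (p u) (p w) \<le> cosh (2 * \<rho>)"
      using H2 that assms(3) by (intro hdist_le_iff) auto
    moreover have "klein_cosh (K u) (K w) = 1 + hdist_quot (p u) (p w)"
      unfolding K_def using H2 that assms(2) by (intro klein_cosh_klein_chart) auto
    ultimately show ?thesis
      using p(2) that by simp
  qed
  ultimately show ?thesis
    by (rule that)
qed

section \<open>Convexity and crossing chords in the Klein disk\<close>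

definition klein_dist :: "complex \<Rightarrow> complex \<Rightarrow> real" where
  "klein_dist p q = arcosh (klein_cosh p q)"

lemma klein_dist_commute: "klein_dist p q = klein_dist q p"
  by (simp add: klein_dist_def klein_cosh_commute)

lemma klein_dist_le_iff:
  assumes "cmod p < 1" "cmod q < 1" "T \<ge> 1"
  shows "klein_dist p q \<le> arcosh T \<longleftrightarrow> klein_cosh p q \<le> T"
  using assms klein_cosh_ge_1[OF assms(1,2)] by (simp add: klein_dist_def not_less[symmetric])

lemma disk_segment:
  assumes "cmod y < 1" "cmod z < 1" "0 \<le> t" "t \<le> 1"
  shows "cmod ((1 - t) *\<^sub>R y + t *\<^sub>R z) < 1"
  using convexD[OF convex_ball[of 0 1], of y z "1 - t" t] assms by simp

lemma norm_segment_sq: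
  "(cmod ((1 - t) *\<^sub>R y + t *\<^sub>R z))\<^sup>2
    = (1 - t)\<^sup>2 * (cmod y)\<^sup>2 + t\<^sup>2 * (cmod z)\<^sup>2 + 2 * t * (1 - t) * Re (y * cnj z)"
  unfolding cmod_power2 by (simp add: power2_eq_square algebra_simps)

lemma mink_form_segment_right:
  "mink_form x ((1 - t) *\<^sub>R y + t *\<^sub>R z) = (1 - t) * mink_form x y + t * mink_form x z"
  by (simp add: mink_form_def algebra_simps)

lemma mink_form_segment_left:
  "mink_form ((1 - t) *\<^sub>R y + t *\<^sub>R z) x = (1 - t) * mink_form y x + t * mink_form z x"
  by (simp add: mink_form_def algebra_simps)

lemma mink_norm_segment_ge:
  assumes "cmod y < 1" "cmod z < 1" "0 \<le> t" "t \<le> 1"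
  shows "(1 - t) * mink_norm y + t * mink_norm z \<le> mink_norm ((1 - t) *\<^sub>R y + t *\<^sub>R z)"
proof -
  define r where "r = (1 - t) *\<^sub>R y + t *\<^sub>R z"
  have r: "cmod r < 1"
    using disk_segment[OF assms] by (simp add: r_def)
  have "((1 - t) * mink_norm y + t * mink_norm z)\<^sup>2
      = (1 - t) * (mink_norm y)\<^sup>2 + t * (mink_norm z)\<^sup>2 - t * (1 - t) * (mink_norm y - mink_norm z)\<^sup>2"
    by (simp add: power2_eq_square algebra_simps)
  also have "\<dots> \<le> (1 - t) * (mink_norm y)\<^sup>2 + t * (mink_norm z)\<^sup>2"
    using assms by simp
  also have "\<dots> = 1 - ((1 - t) * (cmod y)\<^sup>2 + t * (cmod z)\<^sup>2)"
    using assms by (simp add: mink_norm_sq algebra_simps)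
  also have "\<dots> = 1 - (cmod r)\<^sup>2 - t * (1 - t) * (cmod (y - z))\<^sup>2"
    unfolding r_def norm_segment_sq cmod_diff_sq by (simp add: power2_eq_square algebra_simps)
  also have "\<dots> \<le> (mink_norm r)\<^sup>2"
    using assms by (simp add: mink_norm_sq[OF r])
  finally show ?thesis
    unfolding r_def[symmetric] using mink_norm_pos[OF r] by (rule power2_le_imp_le[OF _ less_imp_le])
qed

text \<open>Hyperbolic balls are convex in the Klein model.\<close>

lemma klein_cosh_segment_le_max:
  assumes "cmod x < 1" "cmod y < 1" "cmod z < 1" "0 \<le> t" "t \<le> 1"
  shows "klein_cosh x ((1 - t) *\<^sub>R y + t *\<^sub>R z) \<le> max (klein_cosh x y) (klein_cosh x z)"
proof -
  define r where "r = (1 - t) *\<^sub>R y + t *\<^sub>R z"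
  define M where "M = max (klein_cosh x y) (klein_cosh x z)"
  have r: "cmod r < 1"
    using disk_segment[OF assms(2-5)] by (simp add: r_def)
  have pos: "mink_norm x > 0" "mink_norm y > 0" "mink_norm z > 0" "mink_norm r > 0"
    using mink_norm_pos assms r by auto
  have M1: "M \<ge> 1"
    using klein_cosh_ge_1[OF assms(1,2)] by (simp add: M_def)
  have form_le: "mink_form x w \<le> M * (mink_norm x * mink_norm w)"
    if "klein_cosh x w \<le> M" "mink_norm w > 0" for w
    using that pos(1) by (simp add: klein_cosh_def pos_divide_le_eq)
  have "mink_form x r = (1 - t) * mink_form x y + t * mink_form x z"
    unfolding r_def by (rule mink_form_segment_right)
  also have "\<dots> \<le> (1 - t) * (M * (mink_norm x * mink_norm y)) + t * (M * (mink_norm x * mink_norm z))"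
    using form_le[of y] form_le[of z] pos assms(4,5)
    by (intro add_mono mult_left_mono) (auto simp: M_def)
  also have "\<dots> = M * mink_norm x * ((1 - t) * mink_norm y + t * mink_norm z)"
    by (simp add: algebra_simps)
  also have "\<dots> \<le> M * mink_norm x * mink_norm r"
    using mink_norm_segment_ge[OF assms(2-5)] M1 pos by (simp add: r_def)
  finally have "mink_form x r \<le> M * (mink_norm x * mink_norm r)"
    by (simp add: mult.assoc)
  then have "klein_cosh x r \<le> M"
    using pos by (simp add: klein_cosh_def pos_divide_le_eq)
  then show ?thesis
    by (simp add: r_def M_def)
qed

lemma arcosh_add_arcosh:
  fixes c l m :: real
  assumes "c \<ge> 1" "l \<ge> 0" "m \<ge> 0" "l\<^sup>2 + m\<^sup>2 + 2 * l * m * c = 1"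
    "l + m * c \<ge> 1" "l * c + m \<ge> 1"
  shows "arcosh (l + m * c) + arcosh (l * c + m) = arcosh c"
proof -
  have "(l + m * c)\<^sup>2 - 1 = m\<^sup>2 * (c\<^sup>2 - 1)" "(l * c + m)\<^sup>2 - 1 = l\<^sup>2 * (c\<^sup>2 - 1)"
    using assms(4) by (simp_all add: power2_eq_square algebra_simps)
  then have "cosh (arcosh (l + m * c) + arcosh (l * c + m))
      = (l + m * c) * (l * c + m) + m * l * (c\<^sup>2 - 1)"
    using assms by (simp add: cosh_add sinh_arcosh_real real_sqrt_mult)
  also have "\<dots> = c * (l\<^sup>2 + m\<^sup>2 + 2 * l * m * c)"
    by (simp add: power2_eq_square algebra_simps)
  finally have "cosh (arcosh (l + m * c) + arcosh (l * c + m)) = c"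
    using assms(4) by simp
  then show ?thesis
    using assms(5,6) by (metis add_nonneg_nonneg arcosh_cosh_real arcosh_nonneg_real)
qed

text \<open>Straight segments are geodesics in the Klein model.\<close>

lemma klein_dist_segment_additive:
  assumes "cmod x < 1" "cmod y < 1" "0 \<le> t" "t \<le> 1"
  defines "r \<equiv> (1 - t) *\<^sub>R x + t *\<^sub>R y"
  shows "klein_dist x r + klein_dist r y = klein_dist x y"
proof -
  have r: "cmod r < 1"
    using disk_segment[OF assms(1-4)] by (simp add: r_def)
  have pos: "mink_norm x > 0" "mink_norm y > 0" "mink_norm r > 0"
    using mink_norm_pos assms r by auto
  define c where "c = klein_cosh x y"
  define l where "l = (1 - t) * mink_norm x / mink_norm r"
  define m where "m = t * mink_norm y / mink_norm r"
  have c1: "c \<ge> 1"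
    using klein_cosh_ge_1[OF assms(1,2)] by (simp add: c_def)
  have lm: "l \<ge> 0" "m \<ge> 0"
    using pos assms by (simp_all add: l_def m_def)
  have form_xy: "mink_form x y = c * mink_norm x * mink_norm y"
    using pos by (simp add: c_def klein_cosh_def)
  have form_xx: "mink_form x x = (mink_norm x)\<^sup>2" and form_yy: "mink_form y y = (mink_norm y)\<^sup>2"
    using assms by (simp_all add: mink_form_self mink_norm_sq)
  have d1: "klein_cosh x r = l + m * c"
    using pos unfolding klein_cosh_def r_def mink_form_segment_right form_xx form_xy
    by (simp add: l_def m_def r_def field_simps power2_eq_square)
  have d2: "klein_cosh r y = l * c + m"
    using pos unfolding klein_cosh_def r_def mink_form_segment_left form_yy form_xy
    by (simp add: l_def m_def r_def field_simps power2_eq_square)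
  have norm1: "l\<^sup>2 + m\<^sup>2 + 2 * l * m * c = 1"
  proof -
    have "(mink_norm r)\<^sup>2 = 1 - (cmod r)\<^sup>2"
      using mink_norm_sq[OF r] .
    also have "\<dots> = (1 - t)\<^sup>2 * (mink_norm x)\<^sup>2 + t\<^sup>2 * (mink_norm y)\<^sup>2
        + 2 * t * (1 - t) * mink_form x y"
      unfolding r_def norm_segment_sq mink_norm_sq[OF assms(1)] mink_norm_sq[OF assms(2)] mink_form_def
      by (simp add: power2_eq_square algebra_simps)
    finally have num: "(mink_norm r)\<^sup>2 = ((1 - t) * mink_norm x)\<^sup>2 + (t * mink_norm y)\<^sup>2
        + 2 * ((1 - t) * mink_norm x) * (t * mink_norm y) * c"
      by (simp add: form_xy power2_eq_square algebra_simps)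
    have "l\<^sup>2 + m\<^sup>2 + 2 * l * m * c = (((1 - t) * mink_norm x)\<^sup>2 + (t * mink_norm y)\<^sup>2
        + 2 * ((1 - t) * mink_norm x) * (t * mink_norm y) * c) / (mink_norm r)\<^sup>2"
      using pos by (simp add: l_def m_def field_simps power2_eq_square)
    then show ?thesis
      using num[symmetric] pos by simp
  qed
  have "l + m * c \<ge> 1" "l * c + m \<ge> 1"
    using d1 d2 klein_cosh_ge_1[OF assms(1) r] klein_cosh_ge_1[OF r assms(2)] by simp_all
  then have "arcosh (l + m * c) + arcosh (l * c + m) = arcosh c"
    using c1 lm norm1 by (intro arcosh_add_arcosh)
  then show ?thesis
    by (simp add: klein_dist_def d1 d2 c_def)
qed

text \<open>The Gram determinant of the lifts of x, y, z to Minkowski space is a square; its sign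
  yields the triangle inequality.\<close>

lemma mink_gram_det:
  "(1 - (cmod x)\<^sup>2) * (1 - (cmod y)\<^sup>2) * (1 - (cmod z)\<^sup>2)
     + 2 * mink_form x y * mink_form y z * mink_form x z
     - (mink_form x y)\<^sup>2 * (1 - (cmod z)\<^sup>2) - (mink_form y z)\<^sup>2 * (1 - (cmod x)\<^sup>2)
     - (mink_form x z)\<^sup>2 * (1 - (cmod y)\<^sup>2)
   = ((Re y * Im z - Im y * Re z) - (Re x * Im z - Im x * Re z) + (Re x * Im y - Im x * Re y))\<^sup>2"
  unfolding mink_form_def cmod_power2 by (simp add: power2_eq_square algebra_simps)

lemma klein_cosh_triangle_sq:
  assumes "cmod x < 1" "cmod y < 1" "cmod z < 1"
  defines "a \<equiv> klein_cosh x y" and "b \<equiv> klein_cosh y z" and "c \<equiv> klein_cosh x z"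
  shows "(c - a * b)\<^sup>2 \<le> (a\<^sup>2 - 1) * (b\<^sup>2 - 1)"
proof -
  define px where "px = mink_norm x"
  define py where "py = mink_norm y"
  define pz where "pz = mink_norm z"
  have pos: "px > 0" "py > 0" "pz > 0"
    using mink_norm_pos assms by (auto simp: px_def py_def pz_def)
  have "mink_form x y = a * px * py" "mink_form y z = b * py * pz" "mink_form x z = c * px * pz"
    using pos by (simp_all add: a_def b_def c_def klein_cosh_def px_def py_def pz_def)
  then have "0 \<le> px\<^sup>2 * py\<^sup>2 * pz\<^sup>2 + 2 * (a * px * py) * (b * py * pz) * (c * px * pz)
      - (a * px * py)\<^sup>2 * pz\<^sup>2 - (b * py * pz)\<^sup>2 * px\<^sup>2 - (c * px * pz)\<^sup>2 * py\<^sup>2"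
    using mink_gram_det[of x y z] assms by (simp add: px_def py_def pz_def mink_norm_sq)
  also have "\<dots> = (px * py * pz)\<^sup>2 * ((a\<^sup>2 - 1) * (b\<^sup>2 - 1) - (c - a * b)\<^sup>2)"
    by (simp add: power2_eq_square algebra_simps)
  finally show ?thesis
    using pos by (simp add: zero_le_mult_iff)
qed

lemma klein_dist_triangle:
  assumes "cmod x < 1" "cmod y < 1" "cmod z < 1"
  shows "klein_dist x z \<le> klein_dist x y + klein_dist y z"
proof -
  define a where "a = klein_cosh x y"
  define b where "b = klein_cosh y z"
  define c where "c = klein_cosh x z"
  have abc: "a \<ge> 1" "b \<ge> 1" "c \<ge> 1"
    using klein_cosh_ge_1 assms by (auto simp: a_def b_def c_def)
  have "c - a * b \<le> sqrt ((a\<^sup>2 - 1) * (b\<^sup>2 - 1))"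
    using klein_cosh_triangle_sq[OF assms] unfolding a_def b_def c_def by (rule real_le_rsqrt)
  then have "c \<le> cosh (arcosh a + arcosh b)"
    using abc by (simp add: cosh_add sinh_arcosh_real real_sqrt_mult)
  then have "arcosh c \<le> arcosh a + arcosh b"
    using abc arcosh_le_iff_le_cosh by simp
  then show ?thesis
    by (simp add: klein_dist_def a_def b_def c_def)
qed

lemma klein_dist_crossing:
  assumes "cmod x < 1" "cmod y < 1" "cmod z < 1" "cmod w < 1"
    and "0 \<le> t" "t \<le> 1" "0 \<le> u" "u \<le> 1"
    and "(1 - t) *\<^sub>R x + t *\<^sub>R y = (1 - u) *\<^sub>R z + u *\<^sub>R w"
  shows "klein_dist x w + klein_dist y z \<le> klein_dist x y + klein_dist z w"
proof -
  define X where "X = (1 - t) *\<^sub>R x + t *\<^sub>R y"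
  have X: "cmod X < 1"
    using disk_segment[OF assms(1,2,5,6)] by (simp add: X_def)
  have "klein_dist x X + klein_dist X y = klein_dist x y"
    unfolding X_def by (rule klein_dist_segment_additive[OF assms(1,2,5,6)])
  moreover have "klein_dist z X + klein_dist X w = klein_dist z w"
    unfolding X_def assms(9) by (rule klein_dist_segment_additive[OF assms(3,4,7,8)])
  moreover have "klein_dist x w \<le> klein_dist x X + klein_dist X w"
    by (rule klein_dist_triangle[OF assms(1) X assms(4)])
  moreover have "klein_dist y z \<le> klein_dist y X + klein_dist X z"
    by (rule klein_dist_triangle[OF assms(2) X assms(3)])
  ultimately show ?thesis
    using klein_dist_commute[of y X] klein_dist_commute[of X z] by linarith
qed

lemma klein_cosh_crossing:
  assumes "cmod x < 1" "cmod y < 1" "cmod z < 1" "cmod w < 1"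
    and "0 \<le> t" "t \<le> 1" "0 \<le> u" "u \<le> 1"
    and "(1 - t) *\<^sub>R x + t *\<^sub>R y = (1 - u) *\<^sub>R z + u *\<^sub>R w"
    and "klein_cosh x y \<le> T" "klein_cosh z w \<le> T"
  shows "klein_cosh x w \<le> T \<or> klein_cosh y z \<le> T"
proof -
  have T: "T \<ge> 1"
    using klein_cosh_ge_1[OF assms(1,2)] assms(10) by simp
  show ?thesis
    using klein_dist_crossing[OF assms(1-9)] assms(10,11)
      klein_dist_le_iff[OF assms(1,2) T] klein_dist_le_iff[OF assms(3,4) T]
      klein_dist_le_iff[OF assms(1,4) T] klein_dist_le_iff[OF assms(2,3) T]
    by linarith
qed

section \<open>Angular positions around the centre of the Klein disk\<close>

lemma segment_rcis_eq_rcis: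
  assumes "(1 - t) * A * sin d1 = t * B * sin d2"
  shows "(1 - t) *\<^sub>R rcis A (\<gamma> - d1) + t *\<^sub>R rcis B (\<gamma> + d2)
    = rcis ((1 - t) * A * cos d1 + t * B * cos d2) \<gamma>"
proof -
  have "(1 - t) * (A * cos (\<gamma> - d1)) + t * (B * cos (\<gamma> + d2))
      = cos \<gamma> * ((1 - t) * A * cos d1 + t * B * cos d2)
        + sin \<gamma> * ((1 - t) * A * sin d1 - t * B * sin d2)"
    "(1 - t) * (A * sin (\<gamma> - d1)) + t * (B * sin (\<gamma> + d2))
      = sin \<gamma> * ((1 - t) * A * cos d1 + t * B * cos d2)
        - cos \<gamma> * ((1 - t) * A * sin d1 - t * B * sin d2)"
    by (simp_all add: cos_diff cos_add sin_diff sin_add algebra_simps)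
  then show ?thesis
    using assms by (simp add: complex_eq_iff mult.commute)
qed

lemma segment_meets_ray_ordered:
  assumes "A > 0" "B > 0" "\<alpha> \<le> \<gamma>" "\<gamma> \<le> \<beta>" "\<beta> - \<alpha> < pi / 2"
  shows "\<exists>t s. 0 \<le> t \<and> t \<le> 1 \<and> s > 0 \<and> (1 - t) *\<^sub>R rcis A \<alpha> + t *\<^sub>R rcis B \<beta> = rcis s \<gamma>"
proof -
  define d1 where "d1 = \<gamma> - \<alpha>"
  define d2 where "d2 = \<beta> - \<gamma>"
  have d: "0 \<le> d1" "d1 < pi / 2" "0 \<le> d2" "d2 < pi / 2"
    using assms by (auto simp: d1_def d2_def)
  then have sin: "A * sin d1 \<ge> 0" "B * sin d2 \<ge> 0" and cos: "cos d1 > 0" "cos d2 > 0"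
    using assms(1,2) by (auto intro!: mult_nonneg_nonneg sin_ge_zero cos_gt_zero_pi)
  define t where "t = (if A * sin d1 = 0 then 0 else A * sin d1 / (A * sin d1 + B * sin d2))"
  have t: "0 \<le> t" "t \<le> 1"
    using sin by (auto simp: t_def divide_le_eq)
  have "(1 - t) * A * sin d1 = t * B * sin d2"
  proof (cases "A * sin d1 = 0")
    case False
    then have "A * sin d1 + B * sin d2 > 0"
      using sin by linarith
    then show ?thesis
      using False by (simp add: t_def field_simps)
  qed (simp add: t_def)
  then have "(1 - t) *\<^sub>R rcis A \<alpha> + t *\<^sub>R rcis B \<beta> = rcis ((1 - t) * A * cos d1 + t * B * cos d2) \<gamma>"
    using segment_rcis_eq_rcis[of t A d1 B d2 \<gamma>] by (simp add: d1_def d2_def)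
  moreover have "(1 - t) * A * cos d1 + t * B * cos d2 > 0"
  proof (cases "t = 0")
    case False
    then have "t * B * cos d2 > 0"
      using t assms cos by simp
    moreover have "(1 - t) * A * cos d1 \<ge> 0"
      using t assms cos by simp
    ultimately show ?thesis
      by linarith
  qed (use assms cos in simp)
  ultimately show ?thesis
    using t by blast
qed

lemma segment_meets_ray:
  assumes "A > 0" "B > 0" "min \<alpha> \<beta> \<le> \<gamma>" "\<gamma> \<le> max \<alpha> \<beta>" "\<bar>\<beta> - \<alpha>\<bar> < pi/2"
  shows "\<exists>t s. 0 \<le> t \<and> t \<le> 1 \<and> s > 0 \<and> (1 - t) *\<^sub>R rcis A \<alpha> + t *\<^sub>R rcis B \<beta> = rcis s \<gamma>"
proof (cases "\<alpha> \<le> \<beta>")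
  case True
  thus ?thesis using segment_meets_ray_ordered[of A B \<alpha> \<gamma> \<beta>] assms by auto
next
  case False
  then obtain t s where ts: "0 \<le> t" "t \<le> 1" "s > 0" "(1 - t) *\<^sub>R rcis B \<beta> + t *\<^sub>R rcis A \<alpha> = rcis s \<gamma>"
    using segment_meets_ray_ordered[of B A \<beta> \<gamma> \<alpha>] assms by auto
  show ?thesis
    by (rule exI[of _ "1 - t"], rule exI[of _ s]) (use ts in \<open>auto simp: add.commute\<close>)
qed

lemma scaleR_rcis: "l *\<^sub>R rcis r \<theta> = rcis (l * r) \<theta>"
  by (simp add: rcis_def scaleR_conv_of_real)

text \<open>If the ray from the origin through a meets the edge from u to c, then either a lies beyond
  the meeting point, so that the chords from 0 to a and from u to c cross, or a lies in the
  convex hull of 0, u and c.\<close>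

lemma klein_edge_ray:
  assumes "cmod u < 1" "cmod c < 1" "cmod a < 1"
    and "klein_cosh 0 a \<le> T" "klein_cosh 0 u \<le> T" "klein_cosh u c \<le> T"
    and "0 \<le> t" "t \<le> 1" "(1 - t) *\<^sub>R u + t *\<^sub>R c = rcis s \<theta>" "s > 0"
    and "a = rcis (cmod a) \<theta>"
  shows "klein_cosh 0 c \<le> T \<or> klein_cosh u a \<le> T"
proof (cases "s \<le> cmod a")
  case True
  define l where "l = s / cmod a"
  have l: "0 \<le> l" "l \<le> 1"
    using True assms(10) by (auto simp: l_def divide_le_eq)
  have "(1 - l) *\<^sub>R 0 + l *\<^sub>R a = (1 - t) *\<^sub>R u + t *\<^sub>R c"
    using True assms(10) unfolding assms(9) by (subst assms(11)) (auto simp: scaleR_rcis l_def)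
  then have "klein_cosh 0 c \<le> T \<or> klein_cosh a u \<le> T"
    using assms by (intro klein_cosh_crossing[OF _ assms(3,1,2) l assms(7,8)]) auto
  then show ?thesis
    by (simp add: klein_cosh_commute)
next
  case False
  define P where "P = (1 - t) *\<^sub>R u + t *\<^sub>R c"
  define m where "m = cmod a / s"
  have P: "cmod P < 1"
    using disk_segment[OF assms(1,2,7,8)] by (simp add: P_def)
  have m: "0 \<le> m" "m \<le> 1"
    using False assms(10) by (auto simp: m_def)
  have "(1 - m) *\<^sub>R 0 + m *\<^sub>R P = a"
    using assms(10) unfolding P_def assms(9) by (subst assms(11)) (simp add: scaleR_rcis m_def)
  then have "klein_cosh u a \<le> max (klein_cosh u 0) (klein_cosh u P)"
    using klein_cosh_segment_le_max[of u 0 P m] assms(1) P m by simp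
  moreover have "klein_cosh u P \<le> max (klein_cosh u u) (klein_cosh u c)"
    unfolding P_def by (rule klein_cosh_segment_le_max[OF assms(1,1,2,7,8)])
  moreover have "klein_cosh u u \<le> T"
    using klein_cosh_self[OF assms(1)] klein_cosh_ge_1[of 0 u] assms(1,5) by simp
  ultimately show ?thesis
    using assms(5,6) klein_cosh_commute[of u 0] by auto
qed

lemma klein_spoke_between_linked_spokes:
  assumes "cmod x < 1" "cmod c < 1" "cmod y < 1" "cmod a < 1"
    and "klein_cosh 0 x \<le> T" "klein_cosh 0 y \<le> T" "klein_cosh 0 a \<le> T" "\<not> klein_cosh 0 c \<le> T"
    and "klein_cosh x c \<le> T" "klein_cosh c y \<le> T"
    and "x = rcis (cmod x) \<theta>x" "c = rcis (cmod c) \<theta>c" "y = rcis (cmod y) \<theta>y"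
      "a = rcis (cmod a) \<theta>a"
    and "\<bar>\<theta>c - \<theta>x\<bar> < pi / 2" "\<bar>\<theta>y - \<theta>c\<bar> < pi / 2" "min \<theta>x \<theta>y \<le> \<theta>a" "\<theta>a \<le> max \<theta>x \<theta>y"
  shows "klein_cosh x a \<le> T \<or> klein_cosh y a \<le> T"
proof -
  have "x \<noteq> 0" "y \<noteq> 0"
    using assms(8-10) klein_cosh_commute[of c y] by auto
  moreover have "c \<noteq> 0"
    using assms(1,5,8) klein_cosh_ge_1[of 0 x] klein_cosh_self[of 0] by auto
  ultimately have pos: "cmod x > 0" "cmod y > 0" "cmod c > 0"
    by simp_all
  have "(min \<theta>x \<theta>c \<le> \<theta>a \<and> \<theta>a \<le> max \<theta>x \<theta>c) \<or> (min \<theta>y \<theta>c \<le> \<theta>a \<and> \<theta>a \<le> max \<theta>y \<theta>c)"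
    using assms(17,18) by linarith
  then show ?thesis
  proof
    assume "min \<theta>x \<theta>c \<le> \<theta>a \<and> \<theta>a \<le> max \<theta>x \<theta>c"
    then obtain t s where "0 \<le> t" "t \<le> 1" "s > 0"
      "(1 - t) *\<^sub>R x + t *\<^sub>R c = rcis s \<theta>a"
      using segment_meets_ray[of "cmod x" "cmod c" \<theta>x \<theta>c \<theta>a] pos assms(11,12,15) by auto
    then show ?thesis
      using klein_edge_ray[OF assms(1,2,4,7,5,9)] assms(8,14) by blast
  next
    assume "min \<theta>y \<theta>c \<le> \<theta>a \<and> \<theta>a \<le> max \<theta>y \<theta>c"
    moreover have "\<bar>\<theta>c - \<theta>y\<bar> < pi / 2"
      using assms(16) by linarith
    ultimately obtain t s where "0 \<le> t" "t \<le> 1" "s > 0"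
      "(1 - t) *\<^sub>R y + t *\<^sub>R c = rcis s \<theta>a"
      using segment_meets_ray[of "cmod y" "cmod c" \<theta>y \<theta>c \<theta>a] pos assms(12,13) by auto
    moreover have "klein_cosh y c \<le> T"
      using assms(10) by (simp add: klein_cosh_commute)
    ultimately show ?thesis
      using klein_edge_ray[OF assms(3,2,4,7,6)] assms(8,14) by blast
  qed
qed

lemma abs_Arg_less:
  assumes "w \<noteq> 0" "0 \<le> \<phi>" "\<phi> \<le> pi" "Re w > cos \<phi> * cmod w"
  shows "\<bar>Arg w\<bar> < \<phi>"
proof (rule ccontr)
  assume "\<not> ?thesis"
  then have "cos \<bar>Arg w\<bar> \<le> cos \<phi>"
    using Arg_bounded[of w] assms by (intro cos_monotone_0_pi_le) auto
  moreover have "cos \<bar>Arg w\<bar> = Re w / cmod w"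
    using cos_Arg[OF assms(1)] by (simp add: cos_abs_real)
  moreover have "cmod w > 0"
    using assms(1) by simp
  ultimately show False
    using assms(4) by (simp add: pos_divide_le_eq mult.commute)
qed

lemma abs_Arg_divide_less:
  assumes "u \<noteq> 0" "c \<noteq> 0" "0 \<le> \<phi>" "\<phi> \<le> pi" "Re (u * cnj c) > cos \<phi> * cmod u * cmod c"
  shows "\<bar>Arg (c / u)\<bar> < \<phi>" "\<bar>Arg (u / c)\<bar> < \<phi>"
proof -
  have "Re (c * cnj u) = Re (u * cnj c)"
    by (simp add: algebra_simps)
  have "Re (c / u) = Re (u * cnj c) / (cmod u)\<^sup>2"
    using \<open>Re (c * cnj u) = Re (u * cnj c)\<close> by (simp add: Re_divide cmod_power2)
  also have "\<dots> > cos \<phi> * cmod u * cmod c / (cmod u)\<^sup>2"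
    using assms(1,5) by (simp add: divide_strict_right_mono)
  also have "cos \<phi> * cmod u * cmod c / (cmod u)\<^sup>2 = cos \<phi> * cmod (c / u)"
    using assms(1) by (simp add: norm_divide power2_eq_square)
  finally show "\<bar>Arg (c / u)\<bar> < \<phi>"
    using assms by (intro abs_Arg_less) auto
  have "Re (u / c) = Re (u * cnj c) / (cmod c)\<^sup>2"
    by (simp add: Re_divide cmod_power2)
  also have "\<dots> > cos \<phi> * cmod u * cmod c / (cmod c)\<^sup>2"
    using assms(2,5) by (simp add: divide_strict_right_mono)
  also have "cos \<phi> * cmod u * cmod c / (cmod c)\<^sup>2 = cos \<phi> * cmod (u / c)"
    using assms(2) by (simp add: norm_divide power2_eq_square)
  finally show "\<bar>Arg (u / c)\<bar> < \<phi>"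
    using assms by (intro abs_Arg_less) auto
qed

lemma rcis_Arg_divide:
  assumes "x \<noteq> 0" "y \<noteq> 0" "x = rcis (cmod x) \<theta>"
  shows "y = rcis (cmod y) (\<theta> + Arg (y / x))"
proof -
  have "y = x * (y / x)"
    using assms(1) by simp
  also have "\<dots> = rcis (cmod x) \<theta> * rcis (cmod (y / x)) (Arg (y / x))"
    using assms(3) rcis_cmod_Arg[of "y / x"] by simp
  also have "\<dots> = rcis (cmod y) (\<theta> + Arg (y / x))"
    using assms(1) by (simp add: rcis_mult norm_divide)
  finally show ?thesis .
qed

lemma rcis_eq_rcis_imp_eq:
  assumes "r > 0" "rcis r a = rcis r b" "\<bar>a - b\<bar> < 2 * pi"
  shows "a = b"
proof -
  have "cos (a - b) = 1"
    using assms(1,2) by (simp add: rcis_def cis_def complex_eq_iff cos_diff sin_cos_squared_add3)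
  then obtain n :: int where n: "a - b = real_of_int n * 2 * pi"
    by (auto simp: cos_one_2pi_int)
  then have "\<bar>real_of_int n\<bar> < 1"
    using assms(3) by (simp add: abs_mult)
  then have "n = 0"
    by linarith
  then show ?thesis
    using n by simp
qed

lemma Re_mult_cnj_gt_of_edge:
  assumes "cmod u < 1" "cmod c < 1" "klein_cosh u c \<le> T" "\<not> klein_cosh 0 c \<le> T" "T \<ge> 0"
  shows "Re (u * cnj c) > 1 - mink_norm u"
proof -
  have pos: "mink_norm u > 0" "mink_norm c > 0"
    using mink_norm_pos assms by auto
  have "T * mink_norm c < 1"
    using assms(4) pos by (simp add: klein_cosh_0_left not_le less_divide_eq mult.commute)
  then have "mink_norm u * (T * mink_norm c) < mink_norm u"
    using pos by simp
  moreover have "mink_form u c \<le> T * (mink_norm u * mink_norm c)"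
    using assms(3) pos by (simp add: klein_cosh_def pos_divide_le_eq)
  ultimately show ?thesis
    by (simp add: mink_form_def mult_ac)
qed

text \<open>An upper bound for the angle at the origin between a spoke u and a corner joined to u but
  not to the origin. Two spokes with squared norm at most (T - 1) / (T + 1) are joined to each
  other, so at most one of pairwise non-adjacent spokes gets the weak bound pi / 2.\<close>

definition spoke_angle :: "real \<Rightarrow> complex \<Rightarrow> real" where
  "spoke_angle T u = (if (cmod u)\<^sup>2 \<le> (T - 1) / (T + 1) then pi / 2 else pi / 6)"

lemma spoke_angle_le: "spoke_angle T u \<le> pi / 2"
  by (simp add: spoke_angle_def)

lemma abs_Arg_edge_less_spoke_angle:
  assumes "T \<ge> 312" "cmod u < 1" "cmod c < 1" "u \<noteq> 0" "c \<noteq> 0"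
    "klein_cosh u c \<le> T" "\<not> klein_cosh 0 c \<le> T"
  shows "\<bar>Arg (c / u)\<bar> < spoke_angle T u" "\<bar>Arg (u / c)\<bar> < spoke_angle T u"
proof -
  have Re: "Re (u * cnj c) > 1 - mink_norm u"
    using Re_mult_cnj_gt_of_edge[OF assms(2,3,6,7)] assms(1) by simp
  have "cos (spoke_angle T u) * cmod u * cmod c < Re (u * cnj c)"
  proof (cases "(cmod u)\<^sup>2 \<le> (T - 1) / (T + 1)")
    case True
    have "mink_norm u < 1"
      using assms(2,4) by (simp add: mink_norm_def)
    then show ?thesis
      using Re True by (simp add: spoke_angle_def)
  next
    case False
    have "(mink_norm u)\<^sup>2 < 1 - (T - 1) / (T + 1)"
      using False mink_norm_sq[OF assms(2)] by simp
    also have "\<dots> = 2 / (T + 1)"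
      using assms(1) by (simp add: field_simps)
    also have "\<dots> < (2 / 25)\<^sup>2"
      using assms(1) by (simp add: power2_eq_square divide_less_eq)
    finally have "mink_norm u < 2 / 25"
      by (rule power2_less_imp_less) simp
    moreover have "sqrt 3 < 46 / 25"
      by (rule real_less_lsqrt) (simp_all add: power2_eq_square)
    moreover have "sqrt 3 * (cmod u * cmod c) \<le> sqrt 3"
      using assms(2,3) by (intro mult_left_le) (simp_all add: mult_le_one)
    moreover have "cos (spoke_angle T u) * cmod u * cmod c = sqrt 3 * (cmod u * cmod c) / 2"
      using False by (simp add: spoke_angle_def cos_30)
    ultimately show ?thesis
      using Re by linarith
  qed
  moreover have "0 \<le> spoke_angle T u" "spoke_angle T u \<le> pi"
    by (simp_all add: spoke_angle_def)
  ultimately show "\<bar>Arg (c / u)\<bar> < spoke_angle T u" "\<bar>Arg (u / c)\<bar> < spoke_angle T u"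
    using abs_Arg_divide_less[OF assms(4,5)] by auto
qed

lemma klein_cosh_le_of_small_norms:
  assumes "T \<ge> 1" "cmod u < 1" "cmod w < 1"
    "(cmod u)\<^sup>2 \<le> (T - 1) / (T + 1)" "(cmod w)\<^sup>2 \<le> (T - 1) / (T + 1)"
  shows "klein_cosh u w \<le> T"
proof -
  define k where "k = (T - 1) / (T + 1)"
  have k: "0 \<le> k" "k < 1"
    using assms(1) by (auto simp: k_def)
  have "mink_form u w \<le> 1 + cmod u * cmod w"
    using abs_Re_le_cmod[of "u * cnj w"] by (simp add: mink_form_def norm_mult)
  also have "cmod u * cmod w \<le> k"
    using sum_squares_bound[of "cmod u" "cmod w"] assms(4,5) by (simp add: k_def power2_eq_square)
  finally have "mink_form u w \<le> 1 + k"
    by simp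
  moreover have "sqrt (1 - k) * sqrt (1 - k) \<le> mink_norm u * mink_norm w"
    using assms(4,5) k by (intro mult_mono) (auto simp: mink_norm_def k_def)
  then have "1 - k \<le> mink_norm u * mink_norm w"
    using k by simp
  ultimately have "klein_cosh u w \<le> (1 + k) / (1 - k)"
    unfolding klein_cosh_def using k mink_form_pos[OF assms(2,3)] by (intro frac_le) auto
  also have "(1 + k) / (1 - k) = T"
    using assms(1) by (simp add: k_def field_simps)
  finally show ?thesis .
qed

section \<open>The grid is not a disk graph for large radius\<close>

lemma klein_octagon_min_spoke:
  assumes disk: "cmod w < 1" "cmod d < 1" "cmod n < 1" "cmod c < 1" "cmod e < 1"
    and spoke: "klein_cosh 0 w \<le> T" "klein_cosh 0 n \<le> T" "klein_cosh 0 e \<le> T"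
    and corner: "\<not> klein_cosh 0 d \<le> T" "\<not> klein_cosh 0 c \<le> T"
    and edge: "klein_cosh w d \<le> T" "klein_cosh d n \<le> T" "klein_cosh n c \<le> T" "klein_cosh c e \<le> T"
    and apart: "\<not> klein_cosh w e \<le> T" "\<not> klein_cosh n w \<le> T" "\<not> klein_cosh n e \<le> T"
    and polar: "w = rcis (cmod w) \<theta>w" "d = rcis (cmod d) \<theta>d" "n = rcis (cmod n) \<theta>n"
      "c = rcis (cmod c) \<theta>c" "e = rcis (cmod e) \<theta>e"
    and step: "\<bar>\<theta>d - \<theta>w\<bar> < pi / 2" "\<bar>\<theta>n - \<theta>d\<bar> < pi / 2" "\<bar>\<theta>c - \<theta>n\<bar> < pi / 2"
      "\<bar>\<theta>e - \<theta>c\<bar> < pi / 2"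
    and min: "\<theta>n \<le> \<theta>w" "\<theta>n \<le> \<theta>e"
  shows False
proof (cases "\<theta>e \<le> \<theta>w")
  case True
  then have "klein_cosh w e \<le> T \<or> klein_cosh n e \<le> T"
    using min by (intro klein_spoke_between_linked_spokes[OF disk(1,2,3,5) spoke corner(1)
          edge(1,2) polar(1-3,5) step(1,2)]) auto
  then show False
    using apart by blast
next
  case False
  then have "klein_cosh n w \<le> T \<or> klein_cosh e w \<le> T"
    using min by (intro klein_spoke_between_linked_spokes[OF disk(3,4,5,1) spoke(2,3,1) corner(2)
          edge(3,4) polar(3-5,1) step(3,4)]) auto
  then show False
    using apart klein_cosh_commute[of e w] by auto
qed

lemma spoke_angles_sum_le_pi:
  assumes "T \<ge> 1" "cmod uN < 1" "cmod uE < 1" "cmod uS < 1" "cmod uW < 1"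
    and "\<not> klein_cosh uN uE \<le> T" "\<not> klein_cosh uN uS \<le> T" "\<not> klein_cosh uN uW \<le> T"
      "\<not> klein_cosh uE uS \<le> T" "\<not> klein_cosh uE uW \<le> T" "\<not> klein_cosh uS uW \<le> T"
  shows "spoke_angle T uN + spoke_angle T uE + spoke_angle T uS + spoke_angle T uW \<le> pi"
proof -
  have far: "\<not> ((cmod a)\<^sup>2 \<le> (T - 1) / (T + 1) \<and> (cmod b)\<^sup>2 \<le> (T - 1) / (T + 1))"
    if "cmod a < 1" "cmod b < 1" "\<not> klein_cosh a b \<le> T" for a b
    using klein_cosh_le_of_small_norms[of T a b] assms(1) that by auto
  show ?thesis
    using far[OF assms(2,3,6)] far[OF assms(2,4,7)] far[OF assms(2,5,8)]
      far[OF assms(3,4,9)] far[OF assms(3,5,10)] far[OF assms(4,5,11)]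
    unfolding spoke_angle_def by (auto simp: pi_gt_zero less_imp_le)
qed

lemma klein_octagon_lift:
  fixes uN uE uS uW c1 c2 c3 c4 :: complex
  assumes T: "T \<ge> 312"
    and disk: "cmod uN < 1" "cmod uE < 1" "cmod uS < 1" "cmod uW < 1"
      "cmod c1 < 1" "cmod c2 < 1" "cmod c3 < 1" "cmod c4 < 1"
    and corner: "\<not> klein_cosh 0 c1 \<le> T" "\<not> klein_cosh 0 c2 \<le> T" "\<not> klein_cosh 0 c3 \<le> T"
      "\<not> klein_cosh 0 c4 \<le> T"
    and edge: "klein_cosh uN c1 \<le> T" "klein_cosh c1 uE \<le> T" "klein_cosh uE c2 \<le> T"
      "klein_cosh c2 uS \<le> T" "klein_cosh uS c3 \<le> T" "klein_cosh c3 uW \<le> T"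
      "klein_cosh uW c4 \<le> T" "klein_cosh c4 uN \<le> T"
    and total: "spoke_angle T uN + spoke_angle T uE + spoke_angle T uS + spoke_angle T uW \<le> pi"
  obtains tN tc1 tE tc2 tS tc3 tW tc4 where
    "uN = rcis (cmod uN) tN" "c1 = rcis (cmod c1) tc1" "uE = rcis (cmod uE) tE"
    "c2 = rcis (cmod c2) tc2" "uS = rcis (cmod uS) tS" "c3 = rcis (cmod c3) tc3"
    "uW = rcis (cmod uW) tW" "c4 = rcis (cmod c4) tc4"
    "\<bar>tc1 - tN\<bar> < pi / 2" "\<bar>tE - tc1\<bar> < pi / 2" "\<bar>tc2 - tE\<bar> < pi / 2" "\<bar>tS - tc2\<bar> < pi / 2"
    "\<bar>tc3 - tS\<bar> < pi / 2" "\<bar>tW - tc3\<bar> < pi / 2" "\<bar>tc4 - tW\<bar> < pi / 2" "\<bar>tN - tc4\<bar> < pi / 2"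
proof -
  have edge': "klein_cosh uE c1 \<le> T" "klein_cosh uS c2 \<le> T" "klein_cosh uW c3 \<le> T"
    "klein_cosh uN c4 \<le> T"
    using edge by (simp_all add: klein_cosh_commute)
  have "klein_cosh 0 0 \<le> T"
    using T klein_cosh_self[of 0] by simp
  then have nz: "uN \<noteq> 0" "uE \<noteq> 0" "uS \<noteq> 0" "uW \<noteq> 0" "c1 \<noteq> 0" "c2 \<noteq> 0" "c3 \<noteq> 0" "c4 \<noteq> 0"
    using edge(1) edge' corner by auto
  note angle = abs_Arg_edge_less_spoke_angle[OF T]
  have e1: "\<bar>Arg (c1 / uN)\<bar> < spoke_angle T uN"
    using angle[OF disk(1,5) nz(1,5) edge(1) corner(1)] by simp
  have e2: "\<bar>Arg (uE / c1)\<bar> < spoke_angle T uE"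
    using angle[OF disk(2,5) nz(2,5) edge'(1) corner(1)] by simp
  have e3: "\<bar>Arg (c2 / uE)\<bar> < spoke_angle T uE"
    using angle[OF disk(2,6) nz(2,6) edge(3) corner(2)] by simp
  have e4: "\<bar>Arg (uS / c2)\<bar> < spoke_angle T uS"
    using angle[OF disk(3,6) nz(3,6) edge'(2) corner(2)] by simp
  have e5: "\<bar>Arg (c3 / uS)\<bar> < spoke_angle T uS"
    using angle[OF disk(3,7) nz(3,7) edge(5) corner(3)] by simp
  have e6: "\<bar>Arg (uW / c3)\<bar> < spoke_angle T uW"
    using angle[OF disk(4,7) nz(4,7) edge'(3) corner(3)] by simp
  have e7: "\<bar>Arg (c4 / uW)\<bar> < spoke_angle T uW"
    using angle[OF disk(4,8) nz(4,8) edge(7) corner(4)] by simp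
  have e8: "\<bar>Arg (uN / c4)\<bar> < spoke_angle T uN"
    using angle[OF disk(1,8) nz(1,8) edge'(4) corner(4)] by simp
  define tN where "tN = Arg uN"
  define tc1 where "tc1 = tN + Arg (c1 / uN)"
  define tE where "tE = tc1 + Arg (uE / c1)"
  define tc2 where "tc2 = tE + Arg (c2 / uE)"
  define tS where "tS = tc2 + Arg (uS / c2)"
  define tc3 where "tc3 = tS + Arg (c3 / uS)"
  define tW where "tW = tc3 + Arg (uW / c3)"
  define tc4 where "tc4 = tW + Arg (c4 / uW)"
  have rN: "uN = rcis (cmod uN) tN"
    by (simp add: tN_def rcis_cmod_Arg)
  have rc1: "c1 = rcis (cmod c1) tc1"
    unfolding tc1_def by (rule rcis_Arg_divide[OF nz(1,5) rN])
  have rE: "uE = rcis (cmod uE) tE"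
    unfolding tE_def by (rule rcis_Arg_divide[OF nz(5,2) rc1])
  have rc2: "c2 = rcis (cmod c2) tc2"
    unfolding tc2_def by (rule rcis_Arg_divide[OF nz(2,6) rE])
  have rS: "uS = rcis (cmod uS) tS"
    unfolding tS_def by (rule rcis_Arg_divide[OF nz(6,3) rc2])
  have rc3: "c3 = rcis (cmod c3) tc3"
    unfolding tc3_def by (rule rcis_Arg_divide[OF nz(3,7) rS])
  have rW: "uW = rcis (cmod uW) tW"
    unfolding tW_def by (rule rcis_Arg_divide[OF nz(7,4) rc3])
  have rc4: "c4 = rcis (cmod c4) tc4"
    unfolding tc4_def by (rule rcis_Arg_divide[OF nz(4,8) rW])
  \<comment> \<open>The turning angles along the cycle add up to less than 2 pi, so the lift closes up.\<close>
  have "uN = rcis (cmod uN) (tc4 + Arg (uN / c4))"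
    by (rule rcis_Arg_divide[OF nz(8,1) rc4])
  moreover have "\<bar>tc4 + Arg (uN / c4) - tN\<bar> < 2 * pi"
    using e1 e2 e3 e4 e5 e6 e7 e8 total
    unfolding tc4_def tW_def tc3_def tS_def tc2_def tE_def tc1_def abs_less_iff by linarith
  ultimately have "tc4 + Arg (uN / c4) = tN"
    using nz(1) rN by (intro rcis_eq_rcis_imp_eq[of "cmod uN"]) auto
  then have "tN - tc4 = Arg (uN / c4)"
    by linarith
  then have "\<bar>tN - tc4\<bar> < pi / 2"
    using e8 spoke_angle_le[of T uN] by simp
  moreover have "\<bar>tc1 - tN\<bar> < pi / 2" "\<bar>tE - tc1\<bar> < pi / 2" "\<bar>tc2 - tE\<bar> < pi / 2"
    "\<bar>tS - tc2\<bar> < pi / 2" "\<bar>tc3 - tS\<bar> < pi / 2" "\<bar>tW - tc3\<bar> < pi / 2"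
    "\<bar>tc4 - tW\<bar> < pi / 2"
    using e1 e2 e3 e4 e5 e6 e7
      spoke_angle_le[of T uN] spoke_angle_le[of T uE] spoke_angle_le[of T uS] spoke_angle_le[of T uW]
    by (simp_all add: tc1_def tE_def tc2_def tS_def tc3_def tW_def tc4_def)
  ultimately show ?thesis
    using that rN rc1 rE rc2 rS rc3 rW rc4 by blast
qed

lemma no_klein_octagon:
  fixes uN uE uS uW c1 c2 c3 c4 :: complex
  assumes T: "T \<ge> 312"
    and disk: "cmod uN < 1" "cmod uE < 1" "cmod uS < 1" "cmod uW < 1"
      "cmod c1 < 1" "cmod c2 < 1" "cmod c3 < 1" "cmod c4 < 1"
    and spoke: "klein_cosh 0 uN \<le> T" "klein_cosh 0 uE \<le> T" "klein_cosh 0 uS \<le> T"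
      "klein_cosh 0 uW \<le> T"
    and corner: "\<not> klein_cosh 0 c1 \<le> T" "\<not> klein_cosh 0 c2 \<le> T" "\<not> klein_cosh 0 c3 \<le> T"
      "\<not> klein_cosh 0 c4 \<le> T"
    and edge: "klein_cosh uN c1 \<le> T" "klein_cosh c1 uE \<le> T" "klein_cosh uE c2 \<le> T"
      "klein_cosh c2 uS \<le> T" "klein_cosh uS c3 \<le> T" "klein_cosh c3 uW \<le> T"
      "klein_cosh uW c4 \<le> T" "klein_cosh c4 uN \<le> T"
    and apart: "\<not> klein_cosh uN uE \<le> T" "\<not> klein_cosh uN uS \<le> T" "\<not> klein_cosh uN uW \<le> T"
      "\<not> klein_cosh uE uS \<le> T" "\<not> klein_cosh uE uW \<le> T" "\<not> klein_cosh uS uW \<le> T"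
  shows False
proof -
  have apart': "\<not> klein_cosh uE uN \<le> T" "\<not> klein_cosh uS uN \<le> T" "\<not> klein_cosh uW uN \<le> T"
    "\<not> klein_cosh uS uE \<le> T" "\<not> klein_cosh uW uE \<le> T" "\<not> klein_cosh uW uS \<le> T"
    using apart by (simp_all add: klein_cosh_commute)
  have "spoke_angle T uN + spoke_angle T uE + spoke_angle T uS + spoke_angle T uW \<le> pi"
    using T by (intro spoke_angles_sum_le_pi disk apart) simp
  then obtain tN tc1 tE tc2 tS tc3 tW tc4 where
    polar: "uN = rcis (cmod uN) tN" "c1 = rcis (cmod c1) tc1" "uE = rcis (cmod uE) tE"
      "c2 = rcis (cmod c2) tc2" "uS = rcis (cmod uS) tS" "c3 = rcis (cmod c3) tc3"
      "uW = rcis (cmod uW) tW" "c4 = rcis (cmod c4) tc4"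
    and step: "\<bar>tc1 - tN\<bar> < pi / 2" "\<bar>tE - tc1\<bar> < pi / 2" "\<bar>tc2 - tE\<bar> < pi / 2"
      "\<bar>tS - tc2\<bar> < pi / 2" "\<bar>tc3 - tS\<bar> < pi / 2" "\<bar>tW - tc3\<bar> < pi / 2"
      "\<bar>tc4 - tW\<bar> < pi / 2" "\<bar>tN - tc4\<bar> < pi / 2"
    by (rule klein_octagon_lift[OF T disk corner edge])
  note core = klein_octagon_min_spoke[where T = T]
  consider "tN \<le> tW" "tN \<le> tE" | "tE \<le> tN" "tE \<le> tS" | "tS \<le> tE" "tS \<le> tW"
    | "tW \<le> tS" "tW \<le> tN"
    by linarith
  then show False
  proof cases
    case 1
    show False
      by (rule core[OF disk(4,8,1,5,2) spoke(4,1,2) corner(4,1) edge(7,8,1,2)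
            apart'(5) apart(3) apart(1) polar(7,8,1,2,3) step(7,8,1,2) 1])
  next
    case 2
    show False
      by (rule core[OF disk(1,5,2,6,3) spoke(1,2,3) corner(1,2) edge(1,2,3,4)
            apart(2) apart'(1) apart(4) polar(1-5) step(1-4) 2])
  next
    case 3
    show False
      by (rule core[OF disk(2,6,3,7,4) spoke(2,3,4) corner(2,3) edge(3,4,5,6)
            apart(5) apart'(4) apart(6) polar(3-7) step(3-6) 3])
  next
    case 4
    show False
      by (rule core[OF disk(3,7,4,8,1) spoke(3,4,1) corner(3,4) edge(5,6,7,8)
            apart'(2) apart'(6) apart'(3) polar(5-8,1) step(5-8) 4])
  qed
qed

lemma grid3_no_klein_realization:
  assumes "T \<ge> 312" "K (1, 1) = 0" "\<And>g. g \<in> grid_V 3 \<Longrightarrow> cmod (K g) < 1"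
    "\<And>g h. g \<in> grid_V 3 \<Longrightarrow> h \<in> grid_V 3 \<Longrightarrow> g \<noteq> h \<Longrightarrow>
      grid_E g h \<longleftrightarrow> klein_cosh (K g) (K h) \<le> T"
  shows False
proof -
  have adj: "klein_cosh (K g) (K h) \<le> T \<longleftrightarrow> grid_E g h"
    if "g \<in> grid_V 3" "h \<in> grid_V 3" "g \<noteq> h" for g h
    using assms(4)[OF that] by simp
  have centre: "klein_cosh 0 (K g) \<le> T \<longleftrightarrow> grid_E (1, 1) g"
    if "g \<in> grid_V 3" "g \<noteq> (1, 1)" for g
    using adj[of "(1, 1)" g] that assms(2) by (simp add: grid_V_def)
  show False
    by (rule no_klein_octagon[of T "K (0, 1)" "K (1, 2)" "K (2, 1)" "K (1, 0)"
          "K (0, 2)" "K (2, 2)" "K (2, 0)" "K (0, 0)"])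
      (use assms(1,3) in \<open>simp_all add: adj centre grid_V_def grid_E_def\<close>)
qed

lemma grid_not_hudg_ln:
  assumes "k \<ge> 5"
  shows "\<not> hudg (ln (real (k\<^sup>2))) (grid_V k) grid_E"
proof -
  define N where "N = real (k\<^sup>2)"
  have N: "N \<ge> 25"
    using assms power_mono[of 5 "real k" 2] by (simp add: N_def)
  have "\<not> hudg (ln N) (grid_V k) grid_E"
  proof
    assume "hudg (ln N) (grid_V k) grid_E"
    then obtain K where K: "K (1, 1) = 0" "\<And>g. g \<in> grid_V k \<Longrightarrow> cmod (K g) < 1"
      "\<And>g h. g \<in> grid_V k \<Longrightarrow> h \<in> grid_V k \<Longrightarrow> g \<noteq> h \<Longrightarrow>
        grid_E g h \<longleftrightarrow> klein_cosh (K g) (K h) \<le> cosh (2 * ln N)"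
      by (rule hudg_klein_realization[where v = "(1, 1)"]) (use assms N in \<open>simp_all add: grid_V_def\<close>)
    have sub: "grid_V 3 \<subseteq> grid_V k"
      using assms by (auto simp: grid_V_def)
    have "cosh (2 * ln N) \<ge> 312"
      using N power_mono[of 25 N 2] by (simp add: cosh_2_ln add_increasing2)
    then show False
      using K(1)
    proof (rule grid3_no_klein_realization)
      show "cmod (K g) < 1" if "g \<in> grid_V 3" for g
        using K(2) sub that by blast
      show "grid_E g h \<longleftrightarrow> klein_cosh (K g) (K h) \<le> cosh (2 * ln N)"
        if "g \<in> grid_V 3" "h \<in> grid_V 3" "g \<noteq> h" for g h
        using K(3) sub that by blast
    qed
  qed
  then show ?thesis
    by (simp add: N_def)
qed

section \<open>The star is not a disk graph for small radius\<close>

lemma close_pair_in_interval: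
  fixes f :: "'a \<Rightarrow> real"
  assumes "finite I" "n < card I" "\<delta> > 0" "\<And>i. i \<in> I \<Longrightarrow> a \<le> f i \<and> f i < a + real n * \<delta>"
  obtains i j where "i \<in> I" "j \<in> I" "i \<noteq> j" "\<bar>f i - f j\<bar> < \<delta>"
proof -
  define b where "b i = nat \<lfloor>(f i - a) / \<delta>\<rfloor>" for i
  have "b i < n" if "i \<in> I" for i
  proof -
    have "(f i - a) / \<delta> < real n"
      using assms(3) assms(4)[OF that] by (simp add: divide_less_eq mult.commute)
    then have "\<lfloor>(f i - a) / \<delta>\<rfloor> < int n"
      by (simp add: floor_less_iff)
    moreover have "0 \<le> \<lfloor>(f i - a) / \<delta>\<rfloor>"
      using assms(3) assms(4)[OF that] by simp
    ultimately show ?thesis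
      by (simp add: b_def nat_less_iff)
  qed
  then have "card (b ` I) \<le> card {..<n}"
    by (intro card_mono) auto
  then have "\<not> inj_on b I"
    using assms(2) card_image by fastforce
  then obtain i j where ij: "i \<in> I" "j \<in> I" "i \<noteq> j" "b i = b j"
    unfolding inj_on_def by blast
  have "0 \<le> (f i - a) / \<delta>" "0 \<le> (f j - a) / \<delta>"
    using assms(3,4) ij(1,2) by auto
  then have "\<lfloor>(f i - a) / \<delta>\<rfloor> = \<lfloor>(f j - a) / \<delta>\<rfloor>"
    using ij(4) unfolding b_def by (metis eq_nat_nat_iff zero_le_floor)
  then have "\<bar>(f i - a) / \<delta> - (f j - a) / \<delta>\<bar> < 1"
    using floor_correct[of "(f i - a) / \<delta>"] floor_correct[of "(f j - a) / \<delta>"] by linarith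
  then have "\<bar>f i - f j\<bar> < \<delta>"
    using assms(3) by (simp add: diff_divide_distrib[symmetric] divide_less_eq)
  then show ?thesis
    using ij(1-3) that by blast
qed

lemma angle_gap_of_cos_less:
  fixes a b \<delta> :: real
  assumes "- pi < a" "a \<le> pi" "- pi < b" "b \<le> pi" "0 < \<delta>" "\<delta> \<le> pi" "cos (a - b) < cos \<delta>"
  shows "\<delta> < \<bar>a - b\<bar> \<and> \<bar>a - b\<bar> < 2 * pi - \<delta>"
proof (intro conjI; rule ccontr)
  assume "\<not> \<delta> < \<bar>a - b\<bar>"
  then have "cos \<delta> \<le> cos \<bar>a - b\<bar>"
    using assms(5,6) by (intro cos_monotone_0_pi_le) auto
  then show False
    using assms(7) by (simp add: cos_abs_real)
next
  assume "\<not> \<bar>a - b\<bar> < 2 * pi - \<delta>"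
  moreover have "\<bar>a - b\<bar> < 2 * pi"
    using assms(1-4) by (simp add: abs_less_iff)
  ultimately have "cos \<delta> \<le> cos (2 * pi - \<bar>a - b\<bar>)"
    using assms(5,6) by (intro cos_monotone_0_pi_le) auto
  then show False
    using assms(7) by (simp add: cos_diff cos_abs_real)
qed

lemma angles_close_pair:
  fixes f :: "'a \<Rightarrow> real"
  assumes "finite I" "card I \<ge> 2" "\<And>i. i \<in> I \<Longrightarrow> - pi < f i \<and> f i \<le> pi"
  obtains i j where "i \<in> I" "j \<in> I" "i \<noteq> j" "cos (f i - f j) \<ge> cos (2 * pi / card I)"
proof -
  define \<delta> where "\<delta> = 2 * pi / card I"
  have \<delta>: "0 < \<delta>" "\<delta> \<le> pi"
    using assms(2) by (simp_all add: \<delta>_def field_simps)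
  define n where "n = card I - 1"
  have n: "n < card I" "real n * \<delta> = 2 * pi - \<delta>"
    using assms(2) by (simp_all add: n_def \<delta>_def of_nat_diff field_simps)
  have "\<exists>i\<in>I. \<exists>j\<in>I. i \<noteq> j \<and> cos (f i - f j) \<ge> cos \<delta>"
  proof (rule ccontr)
    assume "\<not> ?thesis"
    then have gap: "\<delta> < \<bar>f i - f j\<bar> \<and> \<bar>f i - f j\<bar> < 2 * pi - \<delta>"
      if "i \<in> I" "j \<in> I" "i \<noteq> j" for i j
      using assms(3)[OF that(1)] assms(3)[OF that(2)] \<delta> that
      by (intro angle_gap_of_cos_less) (auto simp: not_le)
    define \<mu> where "\<mu> = Min (f ` I)"
    have "\<mu> \<in> f ` I"
      unfolding \<mu>_def using assms(1,2) by (intro Min_in) auto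
    then obtain i0 where i0: "i0 \<in> I" "f i0 = \<mu>"
      by auto
    have "\<mu> \<le> f i \<and> f i < \<mu> + real n * \<delta>" if "i \<in> I" for i
    proof -
      have "\<mu> \<le> f i"
        using assms(1) that by (simp add: \<mu>_def)
      moreover have "f i - \<mu> < 2 * pi - \<delta>"
        using gap[OF that i0(1)] i0 \<delta> pi_gt_zero by (cases "i = i0") auto
      ultimately show ?thesis
        using n(2) by simp
    qed
    then obtain i j where "i \<in> I" "j \<in> I" "i \<noteq> j" "\<bar>f i - f j\<bar> < \<delta>"
      using close_pair_in_interval[OF assms(1) n(1) \<delta>(1)] by blast
    then show False
      using gap by fastforce
  qed
  then show ?thesis
    using that by (auto simp: \<delta>_def)
qed

lemma cos_ge_one_minus_sq_half: "cos (x :: real) \<ge> 1 - x\<^sup>2 / 2"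
proof -
  have "(sin (x / 2))\<^sup>2 \<le> (x / 2)\<^sup>2"
    using abs_sin_x_le_abs_x[of "x / 2"] by (metis abs_ge_zero power_mono power2_abs)
  then show ?thesis
    using cos_double_sin[of "x / 2"] by (simp add: power_divide)
qed

lemma cos_2pi_div_7_ge: "cos (2 * pi / 7) \<ge> 11 / 20"
proof -
  have "(2 * pi / 7)\<^sup>2 \<le> (32 / 35)\<^sup>2"
    using pi_approx(2) by (intro power_mono) auto
  then show ?thesis
    using cos_ge_one_minus_sq_half[of "2 * pi / 7"] by (simp add: power2_eq_square)
qed

lemma Re_mult_cnj_eq_cos_Arg: "Re (p * cnj q) = cmod p * cmod q * cos (Arg p - Arg q)"
proof (cases "p = 0 \<or> q = 0")
  case False
  then have "Re p = cmod p * cos (Arg p)" "Im p = cmod p * sin (Arg p)"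
    "Re q = cmod q * cos (Arg q)" "Im q = cmod q * sin (Arg q)"
    using cos_Arg sin_Arg by auto
  then show ?thesis
    by (simp add: cos_diff algebra_simps)
qed auto

lemma klein_cosh_le_of_close_direction:
  assumes "cmod p < 1" "cmod q < 1" "cmod p \<le> cmod q" "(cmod p)\<^sup>2 \<le> 1 / 4"
    "Re (p * cnj q) \<ge> 11 / 20 * cmod p * cmod q"
  shows "klein_cosh p q \<le> klein_cosh 0 q"
proof -
  have pos: "mink_norm p > 0" "mink_norm q > 0"
    using mink_norm_pos assms by auto
  have "mink_form p q \<le> 1 - 11 / 20 * (cmod p)\<^sup>2"
    using assms(3,5) mult_left_mono[OF assms(3), of "cmod p"]
    by (simp add: mink_form_def power2_eq_square)
  also have "\<dots> \<le> mink_norm p"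
    unfolding mink_norm_def
  proof (rule real_le_rsqrt)
    have "(1 - 11 / 20 * a)\<^sup>2 \<le> 1 - a" if "0 \<le> a" "a \<le> 1 / 4" for a :: real
    proof -
      have "(1 - 11 / 20 * a)\<^sup>2 = 1 - a - a * (1 / 10 - 121 / 400 * a)"
        by (simp add: power2_eq_square algebra_simps)
      moreover have "a * (1 / 10 - 121 / 400 * a) \<ge> 0"
        using that by simp
      ultimately show ?thesis
        by linarith
    qed
    then show "(1 - 11 / 20 * (cmod p)\<^sup>2)\<^sup>2 \<le> 1 - (cmod p)\<^sup>2"
      using assms(4) by simp
  qed
  finally have "mink_form p q / (mink_norm p * mink_norm q) \<le> mink_norm p / (mink_norm p * mink_norm q)"
    using pos by (intro divide_right_mono) simp_all
  then show ?thesis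
    unfolding klein_cosh_0_left using pos by (simp add: klein_cosh_def)
qed

lemma norm_sq_le_quarter_of_klein_cosh_0:
  assumes "T\<^sup>2 \<le> 4 / 3" "cmod p < 1" "klein_cosh 0 p \<le> T"
  shows "(cmod p)\<^sup>2 \<le> 1 / 4"
proof -
  have "1 \<le> T * mink_norm p"
    using assms(3) mink_norm_pos[OF assms(2)] by (simp add: klein_cosh_0_left divide_le_eq)
  then have "1 \<le> T\<^sup>2 * (mink_norm p)\<^sup>2"
    by (metis one_le_power power_mult_distrib)
  also have "\<dots> = T\<^sup>2 * (1 - (cmod p)\<^sup>2)"
    using assms(2) by (simp add: mink_norm_sq)
  also have "\<dots> \<le> 4 / 3 * (1 - (cmod p)\<^sup>2)"
    using assms(1,2) by (intro mult_right_mono) (simp_all add: abs_square_le_1)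
  finally show ?thesis
    by simp
qed

lemma klein_close_pair_among_seven:
  assumes "T\<^sup>2 \<le> 4 / 3" "finite I" "card I = 7"
    "\<And>j. j \<in> I \<Longrightarrow> cmod (p j) < 1" "\<And>j. j \<in> I \<Longrightarrow> klein_cosh 0 (p j) \<le> T"
  obtains i j where "i \<in> I" "j \<in> I" "i \<noteq> j" "klein_cosh (p i) (p j) \<le> T"
proof -
  have small: "(cmod (p j))\<^sup>2 \<le> 1 / 4" if "j \<in> I" for j
    using assms(1,4,5) that by (intro norm_sq_le_quarter_of_klein_cosh_0)
  obtain i j where ij: "i \<in> I" "j \<in> I" "i \<noteq> j"
    "cos (Arg (p i) - Arg (p j)) \<ge> cos (2 * pi / card I)"
    using angles_close_pair[OF assms(2), of "\<lambda>j. Arg (p j)"] assms(3) Arg_bounded by auto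
  then have "11 / 20 \<le> cos (Arg (p i) - Arg (p j))"
    using cos_2pi_div_7_ge assms(3) by simp
  then have "11 / 20 * (cmod (p i) * cmod (p j)) \<le> cos (Arg (p i) - Arg (p j)) * (cmod (p i) * cmod (p j))"
    by (rule mult_right_mono) simp
  then have close: "Re (p i * cnj (p j)) \<ge> 11 / 20 * cmod (p i) * cmod (p j)"
    unfolding Re_mult_cnj_eq_cos_Arg by (simp add: mult_ac)
  then have close': "Re (p j * cnj (p i)) \<ge> 11 / 20 * cmod (p j) * cmod (p i)"
    by (simp add: algebra_simps)
  have "klein_cosh (p i) (p j) \<le> max (klein_cosh 0 (p i)) (klein_cosh 0 (p j))"
  proof (cases "cmod (p i) \<le> cmod (p j)")
    case True
    then show ?thesis
      using klein_cosh_le_of_close_direction[OF assms(4)[OF ij(1)] assms(4)[OF ij(2)] True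
          small[OF ij(1)] close] by simp
  next
    case False
    then show ?thesis
      using klein_cosh_le_of_close_direction[OF assms(4)[OF ij(2)] assms(4)[OF ij(1)] _
          small[OF ij(2)] close'] klein_cosh_commute[of "p i" "p j"] by simp
  qed
  then have "klein_cosh (p i) (p j) \<le> T"
    using assms(5)[OF ij(1)] assms(5)[OF ij(2)] by simp
  then show ?thesis
    using that ij(1-3) by blast
qed

lemma star_not_hudg_inverse_cube:
  assumes "n \<ge> 8"
  shows "\<not> hudg (1 / (real n)^3) (star_V n) star_E"
proof
  define x where "x = 2 * (1 / (real n)^3)"
  define T where "T = cosh x"
  assume "hudg (1 / (real n)^3) (star_V n) star_E"
  then obtain K where K: "K 0 = 0" "\<And>j. j \<in> star_V n \<Longrightarrow> cmod (K j) < 1"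
    "\<And>i j. i \<in> star_V n \<Longrightarrow> j \<in> star_V n \<Longrightarrow> i \<noteq> j \<Longrightarrow>
      star_E i j \<longleftrightarrow> klein_cosh (K i) (K j) \<le> T"
    unfolding T_def x_def
    by (rule hudg_klein_realization[where v = 0]) (use assms in \<open>simp_all add: star_V_def\<close>)
  have T: "T\<^sup>2 \<le> 4 / 3"
  proof -
    have "(real n)^3 \<ge> 8^3"
      using assms by (intro power_mono) auto
    then have x: "0 \<le> x" "x \<le> 1 / 256"
      by (auto simp: x_def divide_le_eq)
    then have "T \<le> 1 + x\<^sup>2" "x\<^sup>2 \<le> (1 / 256)\<^sup>2"
      unfolding T_def by (intro cosh_le_one_plus_sq power_mono; simp)+
    then have "T \<le> 1 + (1 / 256)\<^sup>2"
      by linarith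
    moreover have "T \<ge> 0"
      by (simp add: T_def add_pos_nonneg)
    ultimately have "T\<^sup>2 \<le> (1 + (1 / 256)\<^sup>2)\<^sup>2"
      by (intro power_mono)
    then show ?thesis
      by (simp add: power2_eq_square)
  qed
  have leaves: "{1..7} \<subseteq> star_V n"
    using assms by (auto simp: star_V_def)
  have near: "klein_cosh 0 (K j) \<le> T" if "j \<in> {1..7}" for j
    using K(3)[of 0 j] K(1) leaves that by (auto simp: star_V_def star_E_def)
  obtain i j where "i \<in> {1..7::nat}" "j \<in> {1..7}" "i \<noteq> j" "klein_cosh (K i) (K j) \<le> T"
    by (rule klein_close_pair_among_seven[of T "{1..7}" K]) (use T K(2) leaves near in auto)
  then show False
    using K(3)[of i j] leaves by (auto simp: star_E_def subset_iff)
qed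

theorem theorem7:
  shows "(\<forall>k::nat. k \<ge> 1 \<longrightarrow> hudg (1 / (real (k^2))^3) (grid_V k) grid_E)
       \<and> (\<forall>n::nat. n \<ge> 8 \<longrightarrow> \<not> hudg (1 / (real n)^3) (star_V n) star_E)
       \<and> (\<forall>k::nat. k \<ge> 5 \<longrightarrow> \<not> hudg (ln (real (k^2))) (grid_V k) grid_E)
       \<and> (\<forall>n::nat. n \<ge> 1 \<longrightarrow> hudg (ln (real n)) (star_V n) star_E)"
  using grid_hudg_inverse_cube star_not_hudg_inverse_cube grid_not_hudg_ln star_hudg_ln
  by blast

end
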